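(* Let $\Gamma\in(0,1]$ and let $F$ be the cumulative distribution function of a nonnegative random variable such that $F(\Gamma)<1$ and, for some $\Gamma'>\Gamma$, $F$ has on $[0,\Gamma']$ a density $f$ that is differentiable with bounded derivative. Let $h_F(x)=f(x)/(1-F(x))$. For each $N\ge 2$ let $(B^N(t),D^N(t))_{t\ge 0}$ be the scaled HILT Markov chain described in the context, with $B^N(0)=0$ and $D^N(0)/N\to d_0\in(0,1]$ as $N\to\infty$, and put $\tilde B^N(t)=B^N(t)/N$, $\tilde D^N(t)=D^N(t)/N$. Then for every $T>0$ and every $\epsilon>0$, $$\mathbb{P}\Big(\sup_{0\le u\le T}\big\|(\tilde B^N(\lfloor Nu\rfloor),\tilde D^N(\lfloor Nu\rfloor))-(b(u),d(u))\big\|>\epsilon\Big)\xrightarrow{N\to\infty}0,$$ where $(b,d)$ is the unique solution of $$\dot b=d,\qquad \dot d=h_F(\Gamma b)\,\Gamma d\,(1-b-d)-d,$$ with $b(0)=0$, $d(0)=d_0$.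
   Context: HILT (Homogeneous Influence Linear Threshold) model: $N$ nodes; each node $i$ draws, once and for all, a threshold $\Theta_i$, the $\Theta_i$ being i.i.d. with c.d.f. $F$; every ordered pair of nodes carries influence weight $\gamma_N=\Gamma/(N-1)$. A relay (not yet interested node) becomes a destination (interested node) once $\gamma_N$ times the number of destinations whose influence has been counted is at least its threshold; this is irreversible. Scaled HILT Markov chain: $B^N(t)$ is the number of non-infectious destinations and $D^N(t)$ the number of infectious destinations at minislot $t$, with $B^N(t)+D^N(t)\le N$; the remaining $N-B^N(t)-D^N(t)$ nodes are relays. Given $(B^N(t),D^N(t))=(j,m)$: (i) each of the $m$ infectious destinations independently, with probability $1/N$, exerts its influence and becomes non-infectious; let $C$ be their number (so $C\sim\mathrm{Bin}(m,1/N)$); (ii) given $C=c$, each of the $N-j-m$ relays independently becomes an (infectious) destination with probability $\frac{F(\gamma_N(j+c))-F(\gamma_N j)}{1-F(\gamma_N j)}$; let $E$ be their number; (iii) $B^N(t+1)=j+c$, $D^N(t+1)=m-c+E$. *)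

theory Defs
  imports "HOL-Probability.Probability"
begin

definition gammaN :: "real \<Rightarrow> nat \<Rightarrow> real" where
  "gammaN \<Gamma> N = \<Gamma> / (real N - 1)"

text \<open>One minislot of the scaled HILT Markov chain. State (j, m): j non-infectious
  destinations, m infectious destinations, N - j - m relays.\<close>
definition hilt_step :: "(real \<Rightarrow> real) \<Rightarrow> real \<Rightarrow> nat \<Rightarrow> nat \<times> nat \<Rightarrow> (nat \<times> nat) pmf" where
  "hilt_step F \<Gamma> N s = (case s of (j, m) \<Rightarrow>
     do { c \<leftarrow> binomial_pmf m (1 / real N);
          e \<leftarrow> binomial_pmf (N - j - m)
                 ((F (gammaN \<Gamma> N * real (j + c)) - F (gammaN \<Gamma> N * real j))
                    / (1 - F (gammaN \<Gamma> N * real j)));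
          return_pmf (j + c, m - c + e) })"

fun hilt_path :: "(real \<Rightarrow> real) \<Rightarrow> real \<Rightarrow> nat \<Rightarrow> nat \<times> nat \<Rightarrow> nat \<Rightarrow> (nat \<times> nat) list pmf" where
  "hilt_path F \<Gamma> N s0 0 = return_pmf [s0]"
| "hilt_path F \<Gamma> N s0 (Suc n) =
     bind_pmf (hilt_path F \<Gamma> N s0 n) (\<lambda>xs. map_pmf (\<lambda>s. xs @ [s]) (hilt_step F \<Gamma> N (last xs)))"

definition hazard :: "(real \<Rightarrow> real) \<Rightarrow> (real \<Rightarrow> real) \<Rightarrow> real \<Rightarrow> real" where
  "hazard F f x = f x / (1 - F x)"

definition hilt_ode_sol :: "(real \<Rightarrow> real) \<Rightarrow> (real \<Rightarrow> real) \<Rightarrow> real \<Rightarrow> real \<Rightarrow>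
    (real \<Rightarrow> real) \<Rightarrow> (real \<Rightarrow> real) \<Rightarrow> bool" where
  "hilt_ode_sol F f \<Gamma> d0 b d \<longleftrightarrow> b 0 = 0 \<and> d 0 = d0 \<and>
     (\<forall>u\<ge>0. (b has_real_derivative d u) (at u within {0..}) \<and>
            (d has_real_derivative
               (hazard F f (\<Gamma> * b u) * \<Gamma> * d u * (1 - b u - d u) - d u)) (at u within {0..}))"

end

theory Submission
  imports Defs
begin

(*
  Along any solution, b + d = 1 - (1 - d0) (1 - F (Gamma b)) is conserved, so
  d = phi b for an explicit Lipschitz function phi, and b solves the autonomous scalar ODE
  b' = phi b. With b_star the first zero of phi, the time map T(y) = int_{-1}^{y} 1/phi is a
  strictly increasing bijection onto the times, and its inverse bsol is the unique solution;
  uniqueness of the planar system follows by Gronwall's lemma (one application for the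
  conservation law, one for the scalar ODE), after showing that b stays in [0,1].

  For the squared distance between the scaled chain and (bsol, dsol) at the
  matching time, a one-step estimate (binomial moments, a Taylor expansion of F and
  Lipschitz bounds on the hazard rate) gives, for the mean squared error Q(k) after k steps
  (msq_err), the recursion Q(k+1) <= (1 + C1/N) Q(k) + C2/N^2, hence
  Q(k) = O(1/N + (D0 N/N - d0)^2) uniformly for k <= N T. Since the components B and
  B + D of the chain are nondecreasing, as are bsol and bsol + dsol, the supremum over [0,T]
  is controlled by the errors on a fixed finite time grid; Markov's inequality and a union
  bound over the grid finish the proof.
*)

abbreviation E :: "'a pmf \<Rightarrow> ('a \<Rightarrow> real) \<Rightarrow> real" where
  "E p g \<equiv> measure_pmf.expectation p g"

lemma E_sum: "finite (set_pmf p) \<Longrightarrow> E p g = (\<Sum>a\<in>set_pmf p. pmf p a * g a)"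
  by (subst integral_measure_pmf[of "set_pmf p"]) auto

lemma E_bind:
  assumes "finite (set_pmf p)" "\<And>x. x \<in> set_pmf p \<Longrightarrow> finite (set_pmf (f x))"
  shows "E (p \<bind> f) h = E p (\<lambda>x. E (f x) h)"
  using assms by (subst pmf_expectation_bind[of "set_pmf p"]) (auto simp: E_sum)

lemma E_cong: "(\<And>x. x \<in> set_pmf p \<Longrightarrow> g x = g' x) \<Longrightarrow> E p g = E p g'"
  by (rule integral_cong_AE) (auto simp: AE_measure_pmf_iff)

lemma E_mono: "finite (set_pmf p) \<Longrightarrow> (\<And>x. x \<in> set_pmf p \<Longrightarrow> g x \<le> g' x) \<Longrightarrow> E p g \<le> E p g'"
  by (rule integral_mono_AE) (auto simp: AE_measure_pmf_iff integrable_measure_pmf_finite)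

lemma E_add: "finite (set_pmf p) \<Longrightarrow> E p (\<lambda>x. g x + g' x) = E p g + E p g'"
  by (rule Bochner_Integration.integral_add) (auto simp: integrable_measure_pmf_finite)

lemma E_diff: "finite (set_pmf p) \<Longrightarrow> E p (\<lambda>x. g x - g' x) = E p g - E p g'"
  by (rule Bochner_Integration.integral_diff) (auto simp: integrable_measure_pmf_finite)

lemma E_const: "E p (\<lambda>x. c) = c"
  by (simp add: measure_pmf.prob_space)

lemma E_abs: "finite (set_pmf p) \<Longrightarrow> \<bar>E p g\<bar> \<le> E p (\<lambda>x. \<bar>g x\<bar>)"
  using integral_abs_bound[of "measure_pmf p" g] by simp

text \<open>The mean square deviation from any target t is at most the mean square deviation from
  another point a plus the squared bias; this is how one-step errors are propagated.\<close>
lemma E_sq_shift: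
  assumes fin: "finite (set_pmf p)"
  shows "E p (\<lambda>x. (Z x - t)^2) \<le> E p (\<lambda>x. (Z x - a)^2) + (E p Z - t)^2"
proof -
  have eq: "(Z x - t)^2 = (Z x - a)^2 + 2 * (a - t) * Z x + (t^2 - a^2)" for x
    by (simp add: power2_eq_square algebra_simps)
  have "E p (\<lambda>x. (Z x - t)^2) = E p (\<lambda>x. (Z x - a)^2 + 2 * (a - t) * Z x + (t^2 - a^2))"
    by (simp only: eq)
  also have "\<dots> = E p (\<lambda>x. (Z x - a)^2) + 2 * (a - t) * E p Z + (t^2 - a^2)"
    using fin by (simp add: E_add E_const)
  also have "\<dots> = E p (\<lambda>x. (Z x - a)^2) + (E p Z - t)^2 - (E p Z - a)^2"
    by (simp add: power2_eq_square algebra_simps)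
  also have "\<dots> \<le> E p (\<lambda>x. (Z x - a)^2) + (E p Z - t)^2" by simp
  finally show ?thesis .
qed

lemma E_sq_expand:
  assumes "finite (set_pmf p)"
  shows "E p (\<lambda>e. (real e - a)^2) = E p (\<lambda>e. (real e)^2) - 2 * a * E p real + a^2"
proof -
  have "E p (\<lambda>e. (real e - a)^2) = E p (\<lambda>e. (real e)^2 - 2 * a * real e + a^2)"
    by (simp add: power2_eq_square algebra_simps)
  also have "\<dots> = E p (\<lambda>e. (real e)^2) - 2 * a * E p real + a^2"
    using assms by (simp add: E_add E_diff E_const)
  finally show ?thesis .
qed

lemma pmf_markov:
  assumes fin: "finite (set_pmf p)" and nn: "\<And>x. 0 \<le> g x" and c: "0 < c"
  shows "measure_pmf.prob p {x. c < g x} \<le> E p g / c"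
proof -
  have "measure_pmf.prob p {x. c < g x} \<le> measure_pmf.prob p {x \<in> space (measure_pmf p). c \<le> g x}"
    by (intro measure_pmf.finite_measure_mono) auto
  also have "\<dots> \<le> E p g / c"
    by (rule integral_Markov_inequality_measure[where A = UNIV])
      (use fin nn c in \<open>auto intro: integrable_measure_pmf_finite\<close>)
  finally show ?thesis .
qed

section \<open>Binomial moments\<close>

lemma binom_moments:
  assumes p: "p \<in> {0..1}"
  shows "E (binomial_pmf n p) real = n * p \<and>
         E (binomial_pmf n p) (\<lambda>k. real k ^ 2) = n * p * (1 - p) + (n * p)^2"
proof (induction n)
  case 0
  then show ?case using p by (simp add: binomial_pmf_0)
next
  case (Suc n)
  let ?B = "binomial_pmf n p"
  have finB: "finite (set_pmf ?B)" using p by auto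
  have finBer: "finite (set_pmf (bernoulli_pmf p))" by (rule finite_subset[of _ UNIV]) auto
  have step: "E (binomial_pmf (Suc n) p) g = p * E ?B (\<lambda>k. g (1 + k)) + (1 - p) * E ?B g"
    for g :: "nat \<Rightarrow> real"
  proof -
    have "E (binomial_pmf (Suc n) p) g
        = E (bernoulli_pmf p) (\<lambda>b. E ?B (\<lambda>k. g ((if b then 1 else 0) + k)))"
      unfolding binomial_pmf_Suc[OF p] using finBer finB by (subst E_bind; simp add: E_bind)
    also have "\<dots> = p * E ?B (\<lambda>k. g (1 + k)) + (1 - p) * E ?B g"
      using p by (subst integral_bernoulli_pmf) auto
    finally show ?thesis .
  qed
  have m1: "E ?B real = n * p" and m2: "E ?B (\<lambda>k. real k ^ 2) = n * p * (1 - p) + (n * p)^2"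
    using Suc by auto
  have "E ?B (\<lambda>k. 1 + real k) = 1 + E ?B real" using finB by (simp add: E_add E_const)
  then have r1: "E (binomial_pmf (Suc n) p) real = real (Suc n) * p"
    using step[of real] m1 by (simp add: algebra_simps)
  have "E ?B (\<lambda>k. (1 + real k)^2) = E ?B (\<lambda>k. 1 + 2 * real k + real k ^ 2)"
    by (simp add: power2_eq_square algebra_simps)
  also have "\<dots> = 1 + 2 * E ?B real + E ?B (\<lambda>k. real k ^ 2)"
    using finB by (simp add: E_add E_const)
  finally have "E (binomial_pmf (Suc n) p) (\<lambda>k. real k ^ 2) =
      p * (1 + 2 * (n * p) + (n * p * (1 - p) + (n * p)^2)) + (1 - p) * (n * p * (1 - p) + (n * p)^2)"
    using step[of "\<lambda>k. real k ^ 2"] m1 m2 by simp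
  then show ?case using r1 by (simp add: power2_eq_square algebra_simps)
qed

lemma binom_mean: "p \<in> {0..1} \<Longrightarrow> E (binomial_pmf n p) real = n * p"
  using binom_moments by blast

lemma binom_sq_le: "p \<in> {0..1} \<Longrightarrow> E (binomial_pmf n p) (\<lambda>k. real k ^ 2) \<le> n * p + (n * p)^2"
proof -
  assume p: "p \<in> {0..1}"
  have "0 \<le> n * p * p" using p by simp
  then show ?thesis using binom_moments[OF p, of n] by (simp add: algebra_simps)
qed

lemma binom_set: "p \<in> {0..1} \<Longrightarrow> k \<in> set_pmf (binomial_pmf n p) \<Longrightarrow> k \<le> n"
  by (auto simp: set_pmf_binomial_eq split: if_splits)

section \<open>Gronwall-type lemmas\<close>

lemma DERIV_within_nonpos_decreasing:
  fixes g g' :: "real \<Rightarrow> real"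
  assumes "a \<le> b" and d: "\<And>x. x \<in> {a..b} \<Longrightarrow> (g has_real_derivative g' x) (at x within {a..b})"
    and n: "\<And>x. x \<in> {a..b} \<Longrightarrow> g' x \<le> 0"
  shows "g b \<le> g a"
proof (rule DERIV_nonpos_imp_decreasing_open[OF assms(1)])
  fix x assume x: "a < x" "x < b"
  then have "at x within {a..b} = at x" by (intro at_within_interior) auto
  then show "\<exists>y. (g has_real_derivative y) (at x) \<and> y \<le> 0" using d[of x] n[of x] x by auto
next
  show "continuous_on {a..b} g"
    using d by (meson DERIV_continuous continuous_on_eq_continuous_within)
qed

text \<open>Gronwall's inequality in the case of a zero initial value: g' \<le> C g and g 0 = 0 imply
  g \<le> 0 (the function g e^(-Cx) is nonincreasing).\<close>
lemma gronwall_zero: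
  fixes g g' :: "real \<Rightarrow> real"
  assumes "0 \<le> V" and d: "\<And>x. x \<in> {0..V} \<Longrightarrow> (g has_real_derivative g' x) (at x within {0..V})"
    and le: "\<And>x. x \<in> {0..V} \<Longrightarrow> g' x \<le> C * g x" and g0: "g 0 = 0"
    and x: "x \<in> {0..V}"
  shows "g x \<le> 0"
proof -
  let ?k = "\<lambda>x. g x * exp (- C * x)"
  have "?k x \<le> ?k 0"
  proof (rule DERIV_within_nonpos_decreasing[of 0 x ?k "\<lambda>y. (g' y - C * g y) * exp (- C * y)"])
    fix y assume y: "y \<in> {0..x}"
    then have yV: "y \<in> {0..V}" using x by auto
    have "(g has_real_derivative g' y) (at y within {0..x})"
      by (rule has_field_derivative_subset[OF d[OF yV]]) (use x y in auto)
    then show "(?k has_real_derivative (g' y - C * g y) * exp (- C * y)) (at y within {0..x})"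
      by (auto intro!: derivative_eq_intros simp: algebra_simps)
    show "(g' y - C * g y) * exp (- C * y) \<le> 0"
      using le[OF yV] by (simp add: mult_nonpos_nonneg)
  qed (use x in auto)
  then show ?thesis using g0 by (simp add: mult_le_0_iff)
qed

text \<open>Uniqueness principle used twice for the ODE: a function vanishing at 0 whose derivative is
  bounded by a multiple of its absolute value vanishes identically (apply Gronwall to g^2).\<close>
lemma deriv_abs_bound_zero:
  fixes g g' :: "real \<Rightarrow> real"
  assumes V: "0 \<le> V" and d: "\<And>x. x \<in> {0..V} \<Longrightarrow> (g has_real_derivative g' x) (at x within {0..V})"
    and bnd: "\<And>x. x \<in> {0..V} \<Longrightarrow> \<bar>g' x\<bar> \<le> K * \<bar>g x\<bar>" and g0: "g 0 = 0"
    and x: "x \<in> {0..V}"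
  shows "g x = 0"
proof -
  have "g x * g x \<le> 0"
  proof (rule gronwall_zero[OF V _ _ _ x])
    fix y assume y: "y \<in> {0..V}"
    show "((\<lambda>y. g y * g y) has_real_derivative g' y * g y + g' y * g y) (at y within {0..V})"
      by (rule DERIV_mult[OF d[OF y] d[OF y]])
    have "g' y * g y \<le> \<bar>g' y\<bar> * \<bar>g y\<bar>" by (metis abs_ge_self abs_mult)
    also have "\<dots> \<le> K * \<bar>g y\<bar> * \<bar>g y\<bar>" by (intro mult_right_mono bnd[OF y]) auto
    also have "\<dots> = K * (g y * g y)" by (simp add: abs_mult_self_eq mult.assoc)
    finally show "g' y * g y + g' y * g y \<le> 2 * K * (g y * g y)" by linarith
  qed (use g0 in simp)
  then show ?thesis by (metis mult_le_0_iff order_antisym)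
qed

lemma first_exit_unit:
  fixes b :: "real \<Rightarrow> real"
  assumes cont: "\<And>v. 0 \<le> v \<Longrightarrow> continuous (at v within {0..}) b"
    and b0: "b 0 \<in> {0..1}" and v0: "0 \<le> v0" "b v0 \<notin> {0..1}"
  obtains U where "0 \<le> U" "\<And>v. v \<in> {0..U} \<Longrightarrow> b v \<in> {0..1}"
    "\<And>\<delta>. 0 < \<delta> \<Longrightarrow> \<exists>s. U \<le> s \<and> s < U + \<delta> \<and> b s \<notin> {0..1}"
proof -
  define S where "S = {v. 0 \<le> v \<and> b v \<notin> {0..1}}"
  define U where "U = Inf S"
  have Sne: "S \<noteq> {}" using v0 unfolding S_def by auto
  have Sbd: "bdd_below S" unfolding S_def by (auto intro: bdd_belowI[of _ 0])
  have U0: "0 \<le> U" unfolding U_def by (rule cInf_greatest[OF Sne]) (auto simp: S_def)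
  have below: "b v \<in> {0..1}" if "0 \<le> v" "v < U" for v
    using that cInf_lower[OF _ Sbd, of v] unfolding U_def S_def by force
  have bU: "b U \<in> {0..1}"
  proof (cases "U = 0")
    case True then show ?thesis using b0 by simp
  next
    case False
    then have cl: "closure {0..<U} = {0..U}" using U0 by simp
    have "continuous_on {0..U} b"
      using cont by (auto simp: continuous_on_eq_continuous_within
          intro: continuous_within_subset[of _ "{0..}"])
    then have "b ` closure {0..<U} \<subseteq> {0..1}"
      unfolding cl[symmetric] by (rule image_closure_subset) (use below in auto)
    then show ?thesis using U0 unfolding cl image_subset_iff by auto
  qed
  show ?thesis
  proof (rule that[OF U0])
    show "b v \<in> {0..1}" if "v \<in> {0..U}" for v
      using below bU that by (cases "v = U") auto
    fix \<delta> :: real assume "0 < \<delta>"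
    then have "Inf S < U + \<delta>" unfolding U_def by simp
    then obtain s where "s \<in> S" "s < U + \<delta>" using cInf_less_iff[OF Sne Sbd] by blast
    moreover have "U \<le> s" unfolding U_def by (rule cInf_lower[OF \<open>s \<in> S\<close> Sbd])
    ultimately show "\<exists>s. U \<le> s \<and> s < U + \<delta> \<and> b s \<notin> {0..1}" unfolding S_def by blast
  qed
qed


lemma sq_sum_le2: "((a::real) + b)^2 \<le> 2 * a^2 + 2 * b^2"
proof -
  have "0 \<le> (a - b)^2" by simp
  then show ?thesis by (simp add: power2_eq_square algebra_simps)
qed

lemma sq_sum_le3: "((a::real) + b + c)^2 \<le> 3 * a^2 + 3 * b^2 + 3 * c^2"
proof -
  have "0 \<le> (a - b)^2 + (b - c)^2 + (a - c)^2" by simp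
  then show ?thesis by (simp add: power2_eq_square algebra_simps)
qed

text \<open>If X is within \<delta>/N of u then X^2 \<le> (1 + 1/N) u^2 + 2 \<delta>^2/N: the cross term is split
  by the arithmetic-geometric mean inequality with weight N. This is the source of the
  factor 1 + C/N in the error recursion.\<close>
lemma sq_le_of_close:
  fixes N u X \<delta> :: real
  assumes N: "1 \<le> N" and d: "\<bar>X - u\<bar> \<le> \<delta> / N"
  shows "X^2 \<le> (1 + 1 / N) * u^2 + 2 * \<delta>^2 / N"
proof -
  define e where "e = X - u"
  have Np: "0 < N" using N by simp
  have e2: "e^2 \<le> (\<delta> / N)^2"
    using power_mono[of "\<bar>e\<bar>" "\<delta> / N" 2] d unfolding e_def by simp
  have "0 \<le> (u - N * e)^2" by simp
  then have "2 * N * (u * e) \<le> u^2 + N^2 * e^2" by (simp add: power2_eq_square algebra_simps)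
  then have am: "2 * u * e \<le> u^2 / N + N * e^2" using Np by (simp add: field_simps power2_eq_square)
  have "X^2 = u^2 + 2 * u * e + e^2" unfolding e_def by (simp add: power2_eq_square algebra_simps)
  also have "\<dots> \<le> u^2 + u^2 / N + (N + 1) * e^2" using am by (simp add: algebra_simps)
  also have "\<dots> \<le> u^2 + u^2 / N + (N + 1) * (\<delta> / N)^2"
    using e2 Np by (intro add_left_mono mult_left_mono) auto
  also have "(N + 1) * (\<delta> / N)^2 = (N + 1) / N * (\<delta>^2 / N)" using Np by (simp add: power2_eq_square field_simps)
  also have "\<dots> \<le> 2 * (\<delta>^2 / N)"
    using N Np by (intro mult_right_mono) (simp_all add: field_simps)
  finally show ?thesis by (simp add: algebra_simps)
qed

lemma linear_recursion_bound:
  fixes q :: "nat \<Rightarrow> real"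
  assumes rec: "\<And>k. q (Suc k) \<le> a * q k + b" and a: "1 \<le> a" and b: "0 \<le> b"
  shows "q k \<le> a^k * (q 0 + real k * b)"
proof (induction k)
  case 0 then show ?case by simp
next
  case (Suc k)
  have "q (Suc k) \<le> a * (a^k * (q 0 + real k * b)) + b"
    using rec[of k] Suc a by (smt (verit) mult_left_mono)
  also have "b \<le> a^Suc k * b" using mult_right_mono[OF one_le_power[OF a, of "Suc k"] b] by simp
  then have "a * (a^k * (q 0 + real k * b)) + b \<le> a^Suc k * (q 0 + real (Suc k) * b)"
    by (simp add: algebra_simps)
  finally show ?case .
qed

lemma one_plus_pow_le_exp:
  assumes "0 \<le> (x::real)"
  shows "(1 + x)^k \<le> exp (real k * x)"
proof -
  have "(1 + x)^k \<le> (exp x)^k" using assms by (intro power_mono) (auto simp: exp_ge_add_one_self)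
  then show ?thesis by (simp add: exp_of_nat_mult)
qed

lemma nat_floor_le: "0 \<le> (x::real) \<Longrightarrow> real (nat \<lfloor>x\<rfloor>) \<le> x"
  by linarith

lemma floor_scaled_close:
  assumes "0 \<le> u" "0 < N"
  shows "\<bar>real (nat \<lfloor>N * u\<rfloor>) / N - u\<bar> \<le> 1 / N"
proof -
  define x where "x = real (nat \<lfloor>N * u\<rfloor>)"
  have "0 \<le> N * u" using assms by simp
  then have x: "x \<le> N * u" "N * u - 1 \<le> x" unfolding x_def by linarith+
  have "x / N \<le> u" using x(1) assms by (simp add: field_simps)
  moreover have "(N * u - 1) / N \<le> x / N" using x(2) assms by (intro divide_right_mono) auto
  then have "u - 1 / N \<le> x / N" using assms by (simp add: diff_divide_distrib)
  ultimately show ?thesis unfolding x_def[symmetric] by (simp add: abs_le_iff)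
qed

lemma sandwich_bound:
  fixes X X1 X2 x x1 x2 y1 y2 e r w :: real
  assumes "X1 \<le> X" "X \<le> X2" "x1 \<le> x" "x \<le> x2"
    and "\<bar>X1 - y1\<bar> \<le> e" "\<bar>X2 - y2\<bar> \<le> e" "\<bar>y1 - x1\<bar> \<le> r" "\<bar>y2 - x2\<bar> \<le> r" "\<bar>x2 - x1\<bar> \<le> w"
  shows "\<bar>X - x\<bar> \<le> e + r + w"
  using assms by (auto simp: abs_le_iff)

lemma grid_cell:
  fixes T u :: real and M :: nat
  assumes T: "0 < T" and M: "1 \<le> M" and u: "u \<in> {0..T}"
  obtains i where "i < M" "real i * T / real M \<le> u" "u \<le> real (Suc i) * T / real M"
proof -
  have Mp: "0 < real M" using M by simp
  define i where "i = min (M - 1) (nat \<lfloor>u * real M / T\<rfloor>)"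
  have "i < M" unfolding i_def using M by auto
  moreover have "real i \<le> u * real M / T"
  proof -
    have "real i \<le> real (nat \<lfloor>u * real M / T\<rfloor>)" unfolding i_def by simp
    also have "\<dots> \<le> u * real M / T" using u T by (intro nat_floor_le) simp
    finally show ?thesis .
  qed
  then have "real i * T / real M \<le> u" using T Mp by (simp add: field_simps)
  moreover have "u \<le> real (Suc i) * T / real M"
  proof (cases "nat \<lfloor>u * real M / T\<rfloor> \<le> M - 1")
    case True
    then have "i = nat \<lfloor>u * real M / T\<rfloor>" unfolding i_def by simp
    then have "u * real M / T \<le> real (Suc i)" using u T by simp linarith
    then show ?thesis using T Mp by (simp add: field_simps)
  next
    case False
    then have "real (Suc i) = real M" using M unfolding i_def by simp
    then show ?thesis using u Mp by simp
  qed
  ultimately show ?thesis using that by blast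
qed

primrec hilt_chain :: "(real \<Rightarrow> real) \<Rightarrow> real \<Rightarrow> nat \<Rightarrow> nat \<times> nat \<Rightarrow> nat \<Rightarrow> (nat \<times> nat) pmf" where
  "hilt_chain F \<Gamma> N s0 0 = return_pmf s0"
| "hilt_chain F \<Gamma> N s0 (Suc k) = hilt_chain F \<Gamma> N s0 k \<bind> hilt_step F \<Gamma> N"

lemma last_len: "length xs = Suc n \<Longrightarrow> last xs = xs ! n"
  by (cases xs rule: rev_cases) (auto simp: nth_append)

lemma path_len: "xs \<in> set_pmf (hilt_path F \<Gamma> N s0 n) \<Longrightarrow> length xs = Suc n"
  by (induction n arbitrary: xs) (auto simp: set_bind_pmf)

lemma path_0: "xs \<in> set_pmf (hilt_path F \<Gamma> N s0 n) \<Longrightarrow> xs ! 0 = s0"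
proof (induction n arbitrary: xs)
  case 0 then show ?case by simp
next
  case (Suc n)
  from Suc.prems obtain ys s where ys: "ys \<in> set_pmf (hilt_path F \<Gamma> N s0 n)"
    and xs: "xs = ys @ [s]" by (auto simp: set_bind_pmf)
  then show ?case using Suc.IH[OF ys] path_len[OF ys] by (simp add: nth_append)
qed

lemma path_step:
  "xs \<in> set_pmf (hilt_path F \<Gamma> N s0 n) \<Longrightarrow> i < n \<Longrightarrow> xs ! Suc i \<in> set_pmf (hilt_step F \<Gamma> N (xs ! i))"
proof (induction n arbitrary: xs)
  case 0 then show ?case by simp
next
  case (Suc n)
  from Suc.prems(1) obtain ys s where ys: "ys \<in> set_pmf (hilt_path F \<Gamma> N s0 n)"
    and s: "s \<in> set_pmf (hilt_step F \<Gamma> N (last ys))" and xs: "xs = ys @ [s]"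
    by (auto simp: set_bind_pmf)
  have ly: "length ys = Suc n" by (rule path_len[OF ys])
  show ?case
  proof (cases "i < n")
    case True
    then show ?thesis using Suc.IH[OF ys True] ly unfolding xs by (simp add: nth_append)
  next
    case False
    then have "i = n" using Suc.prems by simp
    then show ?thesis using s ly last_len[OF ly] unfolding xs by (simp add: nth_append)
  qed
qed

lemma path_nth: "k \<le> n \<Longrightarrow> map_pmf (\<lambda>xs. xs ! k) (hilt_path F \<Gamma> N s0 n) = hilt_chain F \<Gamma> N s0 k"
proof (induction n arbitrary: k)
  case 0 then show ?case by simp
next
  case (Suc n)
  let ?P = "hilt_path F \<Gamma> N s0 n"
  have extend: "map_pmf (\<lambda>xs. xs ! k) (hilt_path F \<Gamma> N s0 (Suc n)) =
        ?P \<bind> (\<lambda>xs. map_pmf (\<lambda>s. (xs @ [s]) ! k) (hilt_step F \<Gamma> N (last xs)))"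
    by (simp add: map_bind_pmf map_pmf_comp)
  show ?case
  proof (cases "k \<le> n")
    case True
    have "?P \<bind> (\<lambda>xs. map_pmf (\<lambda>s. (xs @ [s]) ! k) (hilt_step F \<Gamma> N (last xs)))
        = ?P \<bind> (\<lambda>xs. return_pmf (xs ! k))"
      using True by (intro bind_pmf_cong) (auto dest!: path_len simp: nth_append map_pmf_const)
    then show ?thesis using extend Suc.IH[OF True] by (simp add: map_pmf_def)
  next
    case False
    then have k: "k = Suc n" using Suc.prems by simp
    have "?P \<bind> (\<lambda>xs. map_pmf (\<lambda>s. (xs @ [s]) ! k) (hilt_step F \<Gamma> N (last xs)))
        = ?P \<bind> (\<lambda>xs. hilt_step F \<Gamma> N (xs ! n))"
      using k by (intro bind_pmf_cong) (auto dest!: path_len simp: nth_append last_len)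
    also have "\<dots> = map_pmf (\<lambda>xs. xs ! n) ?P \<bind> hilt_step F \<Gamma> N"
      by (simp add: bind_map_pmf)
    finally show ?thesis using extend Suc.IH[of n] k by simp
  qed
qed

text \<open>The hypotheses of the main theorem that the argument uses.\<close>
locale hilt_model =
  fixes M :: "real measure" and F f f' :: "real \<Rightarrow> real" and \<Gamma> \<Gamma>' d0 :: real
  assumes M: "real_distribution M" and F_def: "F = cdf M"
    and \<Gamma>: "0 < \<Gamma>" "\<Gamma> \<le> 1" and F\<Gamma>: "F \<Gamma> < 1" and \<Gamma>': "\<Gamma> < \<Gamma>'"
    and dens: "\<forall>x\<in>{0..\<Gamma>'}. (f has_integral F x) {0..x}"
    and fderiv: "\<forall>x\<in>{0..\<Gamma>'}. (f has_real_derivative f' x) (at x within {0..\<Gamma>'})"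
    and fbdd: "\<exists>K. \<forall>x\<in>{0..\<Gamma>'}. \<bar>f' x\<bar> \<le> K"
    and d0: "0 < d0" "d0 \<le> 1"
begin

lemma F_mono: "x \<le> y \<Longrightarrow> F x \<le> F y"
proof -
  interpret real_distribution M by (rule M)
  show "x \<le> y \<Longrightarrow> F x \<le> F y" unfolding F_def by (rule cdf_nondecreasing)
qed

lemma F_nonneg: "0 \<le> F x"
proof -
  interpret real_distribution M by (rule M)
  show ?thesis unfolding F_def by (rule cdf_nonneg)
qed

lemma F_le1: "F x \<le> 1"
  using M unfolding F_def by (simp add: real_distribution.cdf_bounded_prob)

lemma f_cont: "continuous_on {0..\<Gamma>'} f"
proof -
  have "\<And>x. x \<in> {0..\<Gamma>'} \<Longrightarrow> continuous (at x within {0..\<Gamma>'}) f"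
    using fderiv by (meson DERIV_continuous)
  then show ?thesis by (simp add: continuous_on_eq_continuous_within)
qed

lemma F_eq_int: "x \<in> {0..\<Gamma>'} \<Longrightarrow> F x = integral {0..x} f"
  using dens by (metis integral_unique)

lemma F0: "F 0 = 0"
  using F_eq_int[of 0] \<Gamma> \<Gamma>' by simp

text \<open>F is the integral of its density, hence differentiable on [0,\<Gamma>'] with derivative f.\<close>
lemma F_deriv: assumes "x \<in> {0..\<Gamma>'}" shows "(F has_real_derivative f x) (at x within {0..\<Gamma>'})"
proof -
  have "((\<lambda>u. integral {0..u} f) has_vector_derivative f x) (at x within {0..\<Gamma>'})"
    by (rule integral_has_vector_derivative[OF f_cont assms])
  then have "((\<lambda>u. integral {0..u} f) has_real_derivative f x) (at x within {0..\<Gamma>'})"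
    by (simp add: has_real_derivative_iff_has_vector_derivative)
  then show ?thesis
    unfolding has_field_derivative_def
    using has_derivative_transform[OF assms, of F "\<lambda>u. integral {0..u} f"] F_eq_int by blast
qed

lemma F_cont: "continuous_on {0..\<Gamma>'} F"
proof -
  have "\<And>x. x \<in> {0..\<Gamma>'} \<Longrightarrow> continuous (at x within {0..\<Gamma>'}) F"
    using F_deriv by (meson DERIV_continuous)
  then show ?thesis by (simp add: continuous_on_eq_continuous_within)
qed

definition Kf' :: real where "Kf' = (SOME K. \<forall>x\<in>{0..\<Gamma>'}. \<bar>f' x\<bar> \<le> K)"
lemma Kf': "x \<in> {0..\<Gamma>'} \<Longrightarrow> \<bar>f' x\<bar> \<le> Kf'"
  using someI_ex[OF fbdd] unfolding Kf'_def by blast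

definition Bf :: real where "Bf = (SOME B. \<forall>x\<in>{0..\<Gamma>'}. \<bar>f x\<bar> \<le> B)"
lemma Bf: "x \<in> {0..\<Gamma>'} \<Longrightarrow> \<bar>f x\<bar> \<le> Bf"
proof -
  have "compact (f ` {0..\<Gamma>'})" by (intro compact_continuous_image f_cont) auto
  then obtain B where "\<forall>y\<in>f ` {0..\<Gamma>'}. norm y \<le> B"
    using compact_imp_bounded bounded_iff by metis
  then have "\<exists>B. \<forall>x\<in>{0..\<Gamma>'}. \<bar>f x\<bar> \<le> B" by auto
  from someI_ex[OF this] show "x \<in> {0..\<Gamma>'} \<Longrightarrow> \<bar>f x\<bar> \<le> Bf" unfolding Bf_def by blast
qed

lemma Bf_nonneg: "0 \<le> Bf" using Bf[of 0] \<Gamma> \<Gamma>' by auto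
lemma Kf'_nonneg: "0 \<le> Kf'" using Kf'[of 0] \<Gamma> \<Gamma>' by auto

lemma f_lip: "x \<in> {0..\<Gamma>'} \<Longrightarrow> y \<in> {0..\<Gamma>'} \<Longrightarrow> \<bar>f x - f y\<bar> \<le> Kf' * \<bar>x - y\<bar>"
  using field_differentiable_bound[of "{0..\<Gamma>'}" f f' Kf' x y] fderiv Kf' by auto

lemma F_lip: "x \<in> {0..\<Gamma>'} \<Longrightarrow> y \<in> {0..\<Gamma>'} \<Longrightarrow> \<bar>F x - F y\<bar> \<le> Bf * \<bar>x - y\<bar>"
  using field_differentiable_bound[of "{0..\<Gamma>'}" F f Bf x y] F_deriv Bf by auto

lemma F_taylor:
  assumes "0 \<le> x" "x \<le> y" "y \<le> \<Gamma>'"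
  shows "\<bar>F y - F x - f x * (y - x)\<bar> \<le> Kf' * (y - x)^2"
proof -
  let ?g = "\<lambda>t. F t - f x * t"
  have d: "(?g has_real_derivative (f t - f x)) (at t within {x..y})" if "t \<in> {x..y}" for t
  proof -
    have "(F has_real_derivative f t) (at t within {0..\<Gamma>'})" using that assms by (intro F_deriv) auto
    then have "(F has_real_derivative f t) (at t within {x..y})"
      by (rule has_field_derivative_subset) (use assms in auto)
    then show ?thesis by (auto intro!: derivative_eq_intros)
  qed
  have b: "norm (f t - f x) \<le> Kf' * (y - x)" if "t \<in> {x..y}" for t
    using f_lip[of t x] that assms Kf'_nonneg
    by (auto intro: order.trans[OF _ mult_left_mono[of "\<bar>t - x\<bar>" "y - x" Kf']])
  have "norm (?g y - ?g x) \<le> Kf' * (y - x) * norm (y - x)"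
    by (rule field_differentiable_bound[OF _ d b]) (use assms in auto)
  then show ?thesis using assms by (simp add: algebra_simps power2_eq_square)
qed

text \<open>Since F is continuous at \<Gamma> and F \<Gamma> < 1, the bound F < 1 persists on a slightly larger
  interval [0,G2] with G2 < \<Gamma>'. All thresholds \<gamma>_N j met by the chain (for N large) and by the
  ODE lie in [0,G2], where 1 - F is bounded below by \<kappa> > 0.\<close>
lemma exists_G2: "\<exists>G2. \<Gamma> < G2 \<and> G2 < \<Gamma>' \<and> F G2 < 1"
proof -
  have "continuous (at \<Gamma> within {0..\<Gamma>'}) F"
    using F_cont \<Gamma> \<Gamma>' by (simp add: continuous_on_eq_continuous_within)
  then obtain \<delta> where \<delta>: "\<delta> > 0" "\<And>x. x \<in> {0..\<Gamma>'} \<Longrightarrow> dist x \<Gamma> < \<delta> \<Longrightarrow> dist (F x) (F \<Gamma>) < (1 - F \<Gamma>)/2"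
    unfolding continuous_within_eps_delta using F\<Gamma> by (metis diff_gt_0_iff_gt half_gt_zero)
  define G2 where "G2 = min (\<Gamma> + \<delta>/2) ((\<Gamma> + \<Gamma>')/2)"
  have "G2 \<in> {0..\<Gamma>'}" "dist G2 \<Gamma> < \<delta>" using \<delta> \<Gamma> \<Gamma>' unfolding G2_def dist_real_def by (auto simp: min_def)
  then have "dist (F G2) (F \<Gamma>) < (1 - F \<Gamma>)/2" by (rule \<delta>(2))
  then have "F G2 < 1" using F\<Gamma> unfolding dist_real_def abs_less_iff by argo
  moreover have "\<Gamma> < G2" "G2 < \<Gamma>'" using \<delta> \<Gamma>' unfolding G2_def by (auto simp: min_def)
  ultimately show ?thesis by blast
qed

definition G2 :: real where "G2 = (SOME G2. \<Gamma> < G2 \<and> G2 < \<Gamma>' \<and> F G2 < 1)"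
lemma G2: "\<Gamma> < G2" "G2 < \<Gamma>'" "F G2 < 1"
  using someI_ex[OF exists_G2] unfolding G2_def by auto

definition \<kappa> :: real where "\<kappa> = 1 - F G2"
lemma \<kappa>_pos: "0 < \<kappa>" using G2 unfolding \<kappa>_def by simp

lemma one_minus_F_ge: "x \<le> G2 \<Longrightarrow> \<kappa> \<le> 1 - F x"
  using F_mono[of x G2] unfolding \<kappa>_def by simp

abbreviation h :: "real \<Rightarrow> real" where "h \<equiv> hazard F f"

definition Bh :: real where "Bh = Bf / \<kappa>"
definition Lh :: real where "Lh = (Kf' + Bf^2) / \<kappa>^2"

lemma Bh_nonneg: "0 \<le> Bh" using Bf_nonneg \<kappa>_pos unfolding Bh_def by simp
lemma Lh_nonneg: "0 \<le> Lh" using Bf_nonneg Kf'_nonneg \<kappa>_pos unfolding Lh_def by simp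

lemma h_bound: assumes "0 \<le> x" "x \<le> G2" shows "\<bar>h x\<bar> \<le> Bh"
proof -
  have k: "\<kappa> \<le> 1 - F x" by (rule one_minus_F_ge) fact
  have "\<bar>f x\<bar> \<le> Bf" using Bf assms G2 by auto
  then have "\<bar>f x\<bar> / (1 - F x) \<le> Bf / \<kappa>"
    using k \<kappa>_pos Bf_nonneg by (intro frac_le) auto
  then show ?thesis unfolding hazard_def Bh_def using k \<kappa>_pos by (simp add: abs_div)
qed

lemma h_lip: assumes "0 \<le> x" "x \<le> G2" "0 \<le> y" "y \<le> G2" shows "\<bar>h x - h y\<bar> \<le> Lh * \<bar>x - y\<bar>"
proof -
  have kx: "\<kappa> \<le> 1 - F x" and ky: "\<kappa> \<le> 1 - F y" using assms by (auto intro: one_minus_F_ge)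
  have xi: "x \<in> {0..\<Gamma>'}" and yi: "y \<in> {0..\<Gamma>'}" using assms G2 by auto
  have fl: "\<bar>f x - f y\<bar> \<le> Kf' * \<bar>x - y\<bar>" by (rule f_lip[OF xi yi])
  have Fl: "\<bar>F x - F y\<bar> \<le> Bf * \<bar>x - y\<bar>" by (rule F_lip[OF xi yi])
  have fy: "\<bar>f y\<bar> \<le> Bf" using Bf yi by auto
  have fx: "\<bar>f x\<bar> \<le> Bf" using Bf xi by auto
  have px: "0 < 1 - F x" and py: "0 < 1 - F y" using kx ky \<kappa>_pos by auto
  have eq: "h x - h y = ((f x - f y) * (1 - F y) + f y * (F x - F y)) / ((1 - F x) * (1 - F y))"
    unfolding hazard_def using px py by (simp add: field_simps)
  have num: "\<bar>(f x - f y) * (1 - F y) + f y * (F x - F y)\<bar> \<le> (Kf' + Bf^2) * \<bar>x - y\<bar>"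
  proof -
    have "\<bar>(f x - f y) * (1 - F y)\<bar> \<le> Kf' * \<bar>x - y\<bar> * 1"
      unfolding abs_mult using fl py F_nonneg[of y]
      by (intro mult_mono) auto
    moreover have "\<bar>f y * (F x - F y)\<bar> \<le> Bf * (Bf * \<bar>x - y\<bar>)"
      unfolding abs_mult using fy Fl Bf_nonneg by (intro mult_mono) auto
    ultimately show ?thesis by (simp add: algebra_simps power2_eq_square abs_triangle_ineq[THEN order_trans])
  qed
  have den: "\<kappa>^2 \<le> (1 - F x) * (1 - F y)"
    unfolding power2_eq_square using kx ky \<kappa>_pos by (intro mult_mono) auto
  have "\<bar>h x - h y\<bar> = \<bar>(f x - f y) * (1 - F y) + f y * (F x - F y)\<bar> / ((1 - F x) * (1 - F y))"
    unfolding eq using px py by (simp add: abs_div)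
  also have "\<dots> \<le> (Kf' + Bf^2) * \<bar>x - y\<bar> / \<kappa>^2"
    using num den \<kappa>_pos Bf_nonneg Kf'_nonneg by (intro frac_le) auto
  finally show ?thesis unfolding Lh_def by simp
qed

end
context hilt_model begin

section \<open>The limiting ODE\<close>

text \<open>Along a solution, b + d = 1 - (1 - d0) (1 - F (\<Gamma> b)), so d = phi b. To obtain a globally
  Lipschitz right-hand side, phi is extended to the real line by clamping its argument to
  [0,1].\<close>
definition clamp :: "real \<Rightarrow> real" where "clamp y = max 0 (min 1 y)"
definition phi :: "real \<Rightarrow> real" where "phi y = 1 - y - (1 - d0) * (1 - F (\<Gamma> * y))"
definition phi_ext :: "real \<Rightarrow> real" where "phi_ext y = phi (clamp y)"
definition Lphi :: real where "Lphi = 1 + \<Gamma> * Bf"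

lemma scaled_range:
  assumes "y \<in> {0..1}"
  shows "\<Gamma> * y \<in> {0..\<Gamma>'}" "0 \<le> \<Gamma> * y" "\<Gamma> * y \<le> G2"
proof -
  have "\<Gamma> * y \<le> \<Gamma>" using assms \<Gamma> by (simp add: mult_left_le)
  moreover have "0 \<le> \<Gamma> * y" using assms \<Gamma> by simp
  ultimately show "\<Gamma> * y \<in> {0..\<Gamma>'}" "0 \<le> \<Gamma> * y" "\<Gamma> * y \<le> G2" using \<Gamma>' G2 by auto
qed

lemma clamp_in: "clamp y \<in> {0..1}" unfolding clamp_def by auto
lemma clamp_id: "y \<in> {0..1} \<Longrightarrow> clamp y = y" unfolding clamp_def by auto
lemma clamp_lip: "\<bar>clamp x - clamp y\<bar> \<le> \<bar>x - y\<bar>" unfolding clamp_def by auto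

lemma Lphi_ge1: "1 \<le> Lphi" unfolding Lphi_def using \<Gamma> Bf_nonneg by simp

lemma phi_lip: assumes "x \<in> {0..1}" "y \<in> {0..1}" shows "\<bar>phi x - phi y\<bar> \<le> Lphi * \<bar>x - y\<bar>"
proof -
  have "\<bar>F (\<Gamma> * x) - F (\<Gamma> * y)\<bar> \<le> Bf * \<bar>\<Gamma> * x - \<Gamma> * y\<bar>" by (rule F_lip[OF scaled_range(1)[OF assms(1)] scaled_range(1)[OF assms(2)]])
  also have "\<dots> = Bf * \<Gamma> * \<bar>x - y\<bar>" using \<Gamma> by (simp add: abs_mult right_diff_distrib[symmetric])
  finally have Fl: "\<bar>F (\<Gamma> * x) - F (\<Gamma> * y)\<bar> \<le> Bf * \<Gamma> * \<bar>x - y\<bar>" .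
  have "phi x - phi y = -(x - y) + (1 - d0) * (F (\<Gamma> * x) - F (\<Gamma> * y))"
    unfolding phi_def by (simp add: algebra_simps)
  moreover have "\<bar>(1 - d0) * (F (\<Gamma> * x) - F (\<Gamma> * y))\<bar> = (1 - d0) * \<bar>F (\<Gamma> * x) - F (\<Gamma> * y)\<bar>"
    using d0 by (simp add: abs_mult)
  ultimately have "\<bar>phi x - phi y\<bar> \<le> \<bar>x - y\<bar> + (1 - d0) * \<bar>F (\<Gamma> * x) - F (\<Gamma> * y)\<bar>"
    by (metis abs_minus_cancel abs_triangle_ineq)
  also have "\<dots> \<le> \<bar>x - y\<bar> + 1 * (Bf * \<Gamma> * \<bar>x - y\<bar>)"
    using Fl d0 by (intro add_left_mono mult_mono) auto
  finally show ?thesis unfolding Lphi_def by (simp add: algebra_simps)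
qed

lemma phi_ext_lip: "\<bar>phi_ext x - phi_ext y\<bar> \<le> Lphi * \<bar>x - y\<bar>"
proof -
  have "\<bar>phi_ext x - phi_ext y\<bar> \<le> Lphi * \<bar>clamp x - clamp y\<bar>"
    unfolding phi_ext_def by (rule phi_lip[OF clamp_in clamp_in])
  also have "\<dots> \<le> Lphi * \<bar>x - y\<bar>" using Lphi_ge1 clamp_lip by (intro mult_left_mono) auto
  finally show ?thesis .
qed

lemma phi_ext_cont: "continuous_on S phi_ext"
proof (rule lipschitz_on_continuous_on)
  show "Lphi-lipschitz_on S phi_ext"
    using phi_ext_lip Lphi_ge1 by (intro lipschitz_onI) (auto simp: dist_real_def)
qed

lemma phi_ext_neg: "y \<le> 0 \<Longrightarrow> phi_ext y = d0"
  unfolding phi_ext_def clamp_def phi_def using F0 by (simp add: max_def)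

lemma phi_ext_1: "phi_ext 1 \<le> 0"
  unfolding phi_ext_def clamp_def phi_def using d0 F\<Gamma> by (simp add: mult_nonneg_nonneg)

text \<open>b_star is the first zero of phi_ext: phi_ext is positive below b_star and vanishes at
  b_star. The solution b increases towards b_star without reaching it.\<close>
definition b_star :: real where "b_star = Inf {y\<in>{0..1}. phi_ext y \<le> 0}"

lemma b_star_props: "0 < b_star" "b_star \<le> 1" "phi_ext b_star \<le> 0" "\<And>y. y < b_star \<Longrightarrow> 0 < phi_ext y"
proof -
  let ?Z = "{y\<in>{0..1}. phi_ext y \<le> 0}"
  have cl: "closed ?Z"
  proof -
    have "closed ({0..1} \<inter> phi_ext -` {..0})"
      by (rule continuous_closed_preimage[OF phi_ext_cont]) auto
    moreover have "{0..1} \<inter> phi_ext -` {..0} = ?Z" by auto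
    ultimately show ?thesis by simp
  qed
  have ne: "?Z \<noteq> {}" using phi_ext_1 by auto
  have bd: "bdd_below ?Z" by (auto intro: bdd_belowI[of _ 0])
  have inZ: "b_star \<in> ?Z" unfolding b_star_def by (rule closed_contains_Inf[OF ne bd cl])
  then show "b_star \<le> 1" "phi_ext b_star \<le> 0" by auto
  have lt: "0 < phi_ext y" if "y < b_star" for y
  proof (cases "y < 0")
    case True then show ?thesis using phi_ext_neg d0 by simp
  next
    case False
    have "y \<notin> ?Z" using that cInf_lower[OF _ bd, of y] unfolding b_star_def by force
    then show ?thesis using False that \<open>b_star \<le> 1\<close> by auto
  qed
  then show "\<And>y. y < b_star \<Longrightarrow> 0 < phi_ext y" by blast
  show "0 < b_star"
  proof (rule ccontr)
    assume "\<not> 0 < b_star"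
    then have "b_star = 0" using inZ by auto
    then show False using \<open>phi_ext b_star \<le> 0\<close> phi_ext_neg[of 0] d0 by simp
  qed
qed

lemma phi_ext_upper: assumes "y \<le> b_star" shows "phi_ext y \<le> Lphi * (b_star - y)"
proof -
  have "phi_ext y - phi_ext b_star \<le> Lphi * \<bar>y - b_star\<bar>" using phi_ext_lip[of y b_star] by linarith
  moreover have "\<bar>y - b_star\<bar> = b_star - y" using assms by simp
  ultimately show ?thesis using b_star_props(3) by simp
qed

text \<open>The time needed by the scalar ODE b' = phi_ext b to travel from -1 to y < b_star.\<close>
definition inv_phi :: "real \<Rightarrow> real" where "inv_phi y = 1 / phi_ext y"
definition tmap :: "real \<Rightarrow> real" where "tmap y = integral {-1..y} inv_phi"

lemma inv_phi_pos: "y < b_star \<Longrightarrow> 0 < inv_phi y"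
  unfolding inv_phi_def using b_star_props(4) by simp

lemma tmap_deriv: assumes "-1 < y" "y < b_star" shows "(tmap has_real_derivative inv_phi y) (at y)"
proof -
  define c where "c = (y + b_star) / 2"
  have yc: "y < c" "c < b_star" using assms unfolding c_def by auto
  have nz: "\<forall>x\<in>{-1..c}. phi_ext x \<noteq> 0"
  proof
    fix x assume "x \<in> {-1..c}"
    then have "x < b_star" using yc by auto
    then show "phi_ext x \<noteq> 0" using b_star_props(4)[of x] by linarith
  qed
  have "continuous_on {-1..c} (\<lambda>x. 1 / phi_ext x)"
    by (rule continuous_on_divide[OF continuous_on_const phi_ext_cont nz])
  then have cont: "continuous_on {-1..c} inv_phi" unfolding inv_phi_def[abs_def] .
  have yin: "y \<in> {-1..c}" using assms yc by auto
  have "(tmap has_vector_derivative inv_phi y) (at y within {-1..c})"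
    unfolding tmap_def[abs_def] by (rule integral_has_vector_derivative[OF cont yin])
  moreover have "y \<in> interior {-1..c}" using assms yc by simp
  then have "at y within {-1..c} = at y" by (rule at_within_interior)
  ultimately have "(tmap has_vector_derivative inv_phi y) (at y)" by simp
  then show ?thesis by (simp add: has_real_derivative_iff_has_vector_derivative)
qed

lemma tmap_isCont: "-1 < y \<Longrightarrow> y < b_star \<Longrightarrow> isCont tmap y"
  using tmap_deriv DERIV_isCont by blast

lemma tmap_strict: assumes "-1 < x" "x < y" "y < b_star" shows "tmap x < tmap y"
proof (rule DERIV_pos_imp_increasing[OF assms(2)])
  fix z assume "x \<le> z" "z \<le> y"
  then have "-1 < z" "z < b_star" using assms by auto
  then show "\<exists>d. (tmap has_real_derivative d) (at z) \<and> 0 < d"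
    using tmap_deriv inv_phi_pos by blast
qed

lemma tmap_inj: assumes "-1 < x" "x < b_star" "-1 < y" "y < b_star" "tmap x = tmap y" shows "x = y"
  using tmap_strict[of x y] tmap_strict[of y x] assms by (cases x y rule: linorder_cases) auto

text \<open>The time map diverges logarithmically as y approaches b_star, so every time is reached.\<close>
lemma tmap_lower: assumes "0 \<le> y" "y < b_star" shows "(ln b_star - ln (b_star - y)) / Lphi \<le> tmap y - tmap 0"
proof -
  let ?g = "\<lambda>x. tmap x - tmap 0 - (ln b_star - ln (b_star - x)) / Lphi"
  have Lp: "0 < Lphi" using Lphi_ge1 by simp
  have "?g 0 \<le> ?g y"
  proof (rule DERIV_nonneg_imp_nondecreasing[OF assms(1)])
    fix x assume x: "0 \<le> x" "x \<le> y"
    then have xb: "x < b_star" "-1 < x" using assms by auto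
    have "(?g has_real_derivative inv_phi x - 0 - (0 - (- 1) / (b_star - x)) / Lphi) (at x)"
      using tmap_deriv[OF xb(2) xb(1)] xb Lp
      by (intro derivative_eq_intros) auto
    moreover have "inv_phi x - 0 - (0 - (- 1) / (b_star - x)) / Lphi = inv_phi x - 1 / ((b_star - x) * Lphi)"
      by simp
    ultimately have "(?g has_real_derivative inv_phi x - 1 / ((b_star - x) * Lphi)) (at x)" by simp
    moreover have "1 / ((b_star - x) * Lphi) \<le> inv_phi x"
    proof -
      have "0 < phi_ext x" using b_star_props(4) xb by simp
      moreover have "phi_ext x \<le> Lphi * (b_star - x)" using phi_ext_upper xb by simp
      ultimately show ?thesis unfolding inv_phi_def by (intro frac_le) (auto simp: mult.commute)
    qed
    ultimately show "\<exists>d. (?g has_real_derivative d) (at x) \<and> 0 \<le> d"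
      by (intro exI[of _ "inv_phi x - 1 / ((b_star - x) * Lphi)"]) simp
  qed
  then show ?thesis by simp
qed

text \<open>Every time v above tmap(-1/2) - tmap(0) is attained: by the lower bound for nonnegative v,
  by the intermediate value theorem on [-1/2,0] otherwise.\<close>
lemma tmap_hit: assumes "tmap (-1/2) - tmap 0 < v" shows "\<exists>y. -1/2 \<le> y \<and> y < b_star \<and> tmap y = tmap 0 + v"
proof (cases "0 \<le> v")
  case True
  have Lp: "0 < Lphi" using Lphi_ge1 by simp
  define y1 where "y1 = b_star - b_star * exp (- Lphi * v)"
  have bpos: "0 < b_star" using b_star_props(1) .
  have e: "exp (- Lphi * v) \<le> 1" "0 < exp (- Lphi * v)" using True Lp by auto
  have y1: "0 \<le> y1" "y1 < b_star" unfolding y1_def using e bpos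
    by (simp_all add: mult_le_cancel_left1)
  have "b_star - y1 = b_star * exp (- Lphi * v)" unfolding y1_def by simp
  then have "ln (b_star - y1) = ln b_star - Lphi * v" using bpos by (simp add: ln_mult)
  then have "(ln b_star - ln (b_star - y1)) / Lphi = v" using Lp by simp
  then have hi: "tmap 0 + v \<le> tmap y1" using tmap_lower[OF y1] by simp
  have "\<exists>x. 0 \<le> x \<and> x \<le> y1 \<and> tmap x = tmap 0 + v"
  proof (rule IVT[of tmap 0 "tmap 0 + v" y1])
    show "tmap 0 \<le> tmap 0 + v" using True by simp
    show "\<forall>x. 0 \<le> x \<and> x \<le> y1 \<longrightarrow> isCont tmap x"
    proof (intro allI impI)
      fix x assume "0 \<le> x \<and> x \<le> y1"
      then show "isCont tmap x" using y1 by (intro tmap_isCont) auto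
    qed
  qed (use hi y1 in auto)
  then obtain x where "0 \<le> x" "x \<le> y1" "tmap x = tmap 0 + v" by blast
  then show ?thesis using y1 by (intro exI[of _ x]) auto
next
  case False
  have "\<exists>x. -1/2 \<le> x \<and> x \<le> 0 \<and> tmap x = tmap 0 + v"
  proof (rule IVT[of tmap "-1/2" "tmap 0 + v" 0])
    show "\<forall>x::real. -1/2 \<le> x \<and> x \<le> 0 \<longrightarrow> isCont tmap x"
    proof (intro allI impI)
      fix x :: real assume "-1/2 \<le> x \<and> x \<le> 0"
      then show "isCont tmap x" using b_star_props(1) by (intro tmap_isCont) auto
    qed
  qed (use False assms in auto)
  then obtain x where "-1/2 \<le> x" "x \<le> 0" "tmap x = tmap 0 + v" by blast
  then show ?thesis using b_star_props(1) by (intro exI[of _ x]) auto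
qed

text \<open>The solution of the scalar ODE is the inverse of the time map.\<close>
definition bsol :: "real \<Rightarrow> real" where "bsol v = (THE y. -1 < y \<and> y < b_star \<and> tmap y = tmap 0 + v)"

lemma bsol: assumes "tmap (-1/2) - tmap 0 < v"
  shows "-1/2 \<le> bsol v" "bsol v < b_star" "tmap (bsol v) = tmap 0 + v"
proof -
  obtain y where y: "-1/2 \<le> y" "y < b_star" "tmap y = tmap 0 + v" using tmap_hit[OF assms] by blast
  have "bsol v = y" unfolding bsol_def
    by (rule the_equality) (use y tmap_inj in auto)
  then show "-1/2 \<le> bsol v" "bsol v < b_star" "tmap (bsol v) = tmap 0 + v" using y by auto
qed

lemma bsol_eq: assumes "-1 < y" "y < b_star" shows "bsol (tmap y - tmap 0) = y"
  unfolding bsol_def by (rule the_equality) (use assms tmap_inj in auto)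

lemma tmap_half_neg: "tmap (-1/2) - tmap 0 < 0"
  using tmap_strict[of "-1/2" 0] b_star_props(1) by simp

lemma bsol0: "bsol 0 = 0" using bsol_eq[of 0] b_star_props(1) by simp

lemma bsol_nonneg: assumes "0 \<le> u" shows "0 \<le> bsol u" "bsol u < b_star"
proof -
  have b: "-1/2 \<le> bsol u" "bsol u < b_star" "tmap (bsol u) = tmap 0 + u" using bsol[of u] tmap_half_neg assms by auto
  show "bsol u < b_star" by fact
  show "0 \<le> bsol u"
  proof (rule ccontr)
    assume "\<not> 0 \<le> bsol u"
    then have "tmap (bsol u) < tmap 0" using tmap_strict[of "bsol u" 0] b b_star_props(1) by auto
    then show False using b assms by simp
  qed
qed

text \<open>By the inverse function rule bsol' = 1/inv_phi(bsol) = phi_ext(bsol).\<close>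
lemma bsol_deriv: assumes "tmap (-1/2) - tmap 0 < u" shows "(bsol has_real_derivative phi_ext (bsol u)) (at u)"
proof -
  let ?f = "\<lambda>z. tmap z - tmap 0"
  define x where "x = bsol u"
  have bx: "-1/2 \<le> x" "x < b_star" "?f x = u" using bsol[OF assms] unfolding x_def by auto
  define d where "d = min (1/4) ((b_star - x)/2)"
  have d: "0 < d" using bx unfolding d_def by auto
  have zin: "-1 < z \<and> z < b_star" if "\<bar>z - x\<bar> \<le> d" for z
  proof -
    have "\<bar>z - x\<bar> \<le> 1/4" "\<bar>z - x\<bar> \<le> (b_star - x)/2" using that unfolding d_def by auto
    then show ?thesis using bx unfolding abs_le_iff by argo
  qed
  have cont: "isCont bsol (?f x)"
  proof (rule isCont_inverse_function[OF d, where f = ?f and x = x and g = bsol])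
    fix z assume "\<bar>z - x\<bar> \<le> d"
    then show "bsol (?f z) = z" using zin bsol_eq by blast
  next
    fix z assume "\<bar>z - x\<bar> \<le> d"
    then have "-1 < z" "z < b_star" using zin by auto
    then have "isCont tmap z" by (rule tmap_isCont)
    then show "isCont ?f z" by (intro continuous_intros)
  qed
  have "DERIV bsol u :> inverse (inv_phi x)"
  proof (rule DERIV_inverse_function[where f = ?f and a = "tmap (-1/2) - tmap 0" and b = "u + 1"])
    show "DERIV ?f (bsol u) :> inv_phi x"
      using tmap_deriv[of x] bx unfolding x_def by (auto intro!: derivative_eq_intros)
    show "inv_phi x \<noteq> 0" using inv_phi_pos bx by (metis less_irrefl)
    show "tmap (-1/2) - tmap 0 < u" "u < u + 1" by (fact assms) simp
    fix y assume "tmap (-1/2) - tmap 0 < y" "y < u + 1"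
    then show "?f (bsol y) = y" using bsol(3) by simp
  next
    show "isCont bsol u" using cont bx by simp
  qed
  then show ?thesis unfolding x_def inv_phi_def by simp
qed

lemma bsol_range: "0 \<le> u \<Longrightarrow> bsol u \<in> {0..1}"
  using bsol_nonneg b_star_props(2) by fastforce

lemma phi_ext_in: "y \<in> {0..1} \<Longrightarrow> phi_ext y = 1 - y - (1 - d0) * (1 - F (\<Gamma> * y))"
  unfolding phi_ext_def phi_def by (simp add: clamp_id)

lemma F_chain:
  assumes bd: "(b has_real_derivative b') (at u within S)"
    and img: "\<And>v. v \<in> S \<Longrightarrow> \<Gamma> * b v \<in> {0..\<Gamma>'}" and u: "u \<in> S"
  shows "((\<lambda>v. F (\<Gamma> * b v)) has_real_derivative f (\<Gamma> * b u) * (\<Gamma> * b')) (at u within S)"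
proof -
  have g: "((\<lambda>v. \<Gamma> * b v) has_real_derivative \<Gamma> * b') (at u within S)"
    using bd by (auto intro!: derivative_eq_intros)
  have "(F has_real_derivative f (\<Gamma> * b u)) (at (\<Gamma> * b u) within {0..\<Gamma>'})"
    using F_deriv img[OF u] by blast
  then have "(F has_real_derivative f (\<Gamma> * b u)) (at (\<Gamma> * b u) within ((\<lambda>v. \<Gamma> * b v) ` S))"
    by (rule has_field_derivative_subset) (use img in auto)
  from DERIV_image_chain[OF this g] show ?thesis by (simp add: o_def)
qed

text \<open>Existence: (bsol, phi_ext \<circ> bsol) solves the planar system, since the derivative of
  phi(bsol) is exactly the d-equation when d = phi b.\<close>
lemma sol_exists: "hilt_ode_sol F f \<Gamma> d0 bsol (\<lambda>u. phi_ext (bsol u))"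
  unfolding hilt_ode_sol_def
proof (intro conjI allI impI)
  show "bsol 0 = 0" by (rule bsol0)
  show "phi_ext (bsol 0) = d0" using bsol0 phi_ext_neg by simp
  fix u :: real assume u: "0 \<le> u"
  have bd: "(bsol has_real_derivative phi_ext (bsol u)) (at u within {0..})"
    using bsol_deriv[of u] tmap_half_neg u by (auto intro: has_field_derivative_at_within)
  then show "(bsol has_real_derivative phi_ext (bsol u)) (at u within {0..})" .
  let ?x = "bsol u" let ?D = "phi_ext (bsol u)"
  have xr: "?x \<in> {0..1}" "\<Gamma> * ?x \<le> G2" using bsol_range scaled_range u by auto
  have fc: "((\<lambda>v. F (\<Gamma> * bsol v)) has_real_derivative f (\<Gamma> * ?x) * (\<Gamma> * ?D)) (at u within {0..})"
    by (rule F_chain[OF bd]) (use bsol_range scaled_range u in auto)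
  have "((\<lambda>v. 1 - bsol v - (1 - d0) * (1 - F (\<Gamma> * bsol v))) has_real_derivative
      0 - ?D - (1 - d0) * (0 - f (\<Gamma> * ?x) * (\<Gamma> * ?D))) (at u within {0..})"
    by (intro DERIV_diff DERIV_const DERIV_cmult fc bd)
  then have dsol: "((\<lambda>v. 1 - bsol v - (1 - d0) * (1 - F (\<Gamma> * bsol v))) has_derivative
      (*) (0 - ?D - (1 - d0) * (0 - f (\<Gamma> * ?x) * (\<Gamma> * ?D)))) (at u within {0..})"
    unfolding has_field_derivative_def .
  have eqs: "\<And>v. v \<in> {0..} \<Longrightarrow> phi_ext (bsol v) = 1 - bsol v - (1 - d0) * (1 - F (\<Gamma> * bsol v))"
    using bsol_range phi_ext_in by auto
  have uin: "u \<in> {0..}" using u by simp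
  have d1: "((\<lambda>v. phi_ext (bsol v)) has_real_derivative
      0 - ?D - (1 - d0) * (0 - f (\<Gamma> * ?x) * (\<Gamma> * ?D))) (at u within {0..})"
    unfolding has_field_derivative_def by (rule has_derivative_transform[OF uin eqs dsol])
  have k: "0 < 1 - F (\<Gamma> * ?x)" using one_minus_F_ge[OF xr(2)] \<kappa>_pos by linarith
  have eqn: "0 - ?D - (1 - d0) * (0 - f (\<Gamma> * ?x) * (\<Gamma> * ?D)) =
        hazard F f (\<Gamma> * ?x) * \<Gamma> * ?D * (1 - ?x - ?D) - ?D"
    unfolding hazard_def phi_ext_in[OF xr(1)] using k by (simp add: field_simps)
  show "((\<lambda>v. phi_ext (bsol v)) has_real_derivative
      hazard F f (\<Gamma> * bsol u) * \<Gamma> * phi_ext (bsol u) * (1 - bsol u - phi_ext (bsol u)) - phi_ext (bsol u)) (at u within {0..})"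
    unfolding eqn[symmetric] by (rule d1)
qed

lemma bsol_deriv_within: "0 \<le> u \<Longrightarrow> (bsol has_real_derivative phi_ext (bsol u)) (at u within S)"
  using bsol_deriv[of u] tmap_half_neg by (auto intro: has_field_derivative_at_within)


lemma sol_derivs_on:
  assumes sol: "hilt_ode_sol F f \<Gamma> d0 b d" and S: "S \<subseteq> {0..}" and v: "v \<in> S"
  shows "(b has_real_derivative d v) (at v within S)"
    "(d has_real_derivative (h (\<Gamma> * b v) * \<Gamma> * d v * (1 - b v - d v) - d v)) (at v within S)"
  using sol v S unfolding hilt_ode_sol_def by (auto intro: has_field_derivative_subset)

text \<open>Conservation law: as long as b stays in [0,1], the quantity
  w = 1 - b - d - (1 - d0) (1 - F (\<Gamma> b)) satisfies w' = -h(\<Gamma> b) \<Gamma> d w and w(0) = 0,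
  so w vanishes, i.e. d = phi b.\<close>
lemma sol_conservation:
  assumes sol: "hilt_ode_sol F f \<Gamma> d0 b d" and V: "0 \<le> V"
    and rng: "\<And>v. v \<in> {0..V} \<Longrightarrow> b v \<in> {0..1}" and v: "v \<in> {0..V}"
  shows "d v = phi_ext (b v)"
proof -
  let ?H = "\<lambda>v. h (\<Gamma> * b v)"
  have init: "b 0 = 0" "d 0 = d0" using sol unfolding hilt_ode_sol_def by auto
  have S: "{0..V} \<subseteq> {0..}" by auto
  note bd = sol_derivs_on(1)[OF sol S] and ddv = sol_derivs_on(2)[OF sol S]
  have "continuous_on {0..V} d"
    using ddv by (meson DERIV_continuous continuous_on_eq_continuous_within)
  then have "compact (d ` {0..V})" by (intro compact_continuous_image) auto
  then obtain Dm where Dm: "\<And>v. v \<in> {0..V} \<Longrightarrow> \<bar>d v\<bar> \<le> Dm"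
    using compact_imp_bounded bounded_iff by (metis image_eqI real_norm_def)
  note img = scaled_range[OF rng]
  have kpos: "0 < 1 - F (\<Gamma> * b v)" if "v \<in> {0..V}" for v
    using one_minus_F_ge[OF img(3)[OF that]] \<kappa>_pos by linarith
  define w where "w v = 1 - b v - d v - (1 - d0) * (1 - F (\<Gamma> * b v))" for v
  have wd: "(w has_real_derivative (- (?H v * \<Gamma> * d v) * w v)) (at v within {0..V})"
    if v: "v \<in> {0..V}" for v
  proof -
    have fc: "((\<lambda>v. F (\<Gamma> * b v)) has_real_derivative f (\<Gamma> * b v) * (\<Gamma> * d v)) (at v within {0..V})"
      by (rule F_chain[OF bd[OF v]]) (use img v in auto)
    have "(w has_real_derivative 0 - d v - (?H v * \<Gamma> * d v * (1 - b v - d v) - d v)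
            - (1 - d0) * (0 - f (\<Gamma> * b v) * (\<Gamma> * d v))) (at v within {0..V})"
      unfolding w_def[abs_def] by (intro DERIV_diff DERIV_const DERIV_cmult fc bd[OF v] ddv[OF v])
    moreover have "0 - d v - (?H v * \<Gamma> * d v * (1 - b v - d v) - d v)
            - (1 - d0) * (0 - f (\<Gamma> * b v) * (\<Gamma> * d v)) = - (?H v * \<Gamma> * d v) * w v"
      unfolding w_def hazard_def using kpos[OF v] by (simp add: field_simps)
    ultimately show ?thesis by simp
  qed
  have "w v = 0"
  proof (rule deriv_abs_bound_zero[OF V wd _ _ v])
    fix x assume x: "x \<in> {0..V}"
    have "\<bar>?H x\<bar> * \<Gamma> * \<bar>d x\<bar> \<le> Bh * \<Gamma> * Dm"
      using h_bound[OF img(2,3)[OF x]] Dm[OF x] \<Gamma> Bh_nonneg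
      by (intro mult_mono) (auto intro: mult_right_mono)
    then show "\<bar>- (?H x * \<Gamma> * d x) * w x\<bar> \<le> Bh * \<Gamma> * Dm * \<bar>w x\<bar>"
      using \<Gamma> by (simp add: abs_mult mult_right_mono)
  qed (simp_all add: w_def init F0)
  then show ?thesis using phi_ext_in[OF rng[OF v]] unfolding w_def by simp
qed

text \<open>Given the conservation law, b solves the scalar Lipschitz ODE b' = phi_ext b, whose
  solution from 0 is unique.\<close>
lemma sol_eq_bsol:
  assumes sol: "hilt_ode_sol F f \<Gamma> d0 b d" and V: "0 \<le> V"
    and rng: "\<And>v. v \<in> {0..V} \<Longrightarrow> b v \<in> {0..1}" and v: "v \<in> {0..V}"
  shows "b v = bsol v"
proof -
  have S: "{0..V} \<subseteq> {0..}" by auto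
  have "b v - bsol v = 0"
  proof (rule deriv_abs_bound_zero[OF V _ _ _ v])
    fix x assume x: "x \<in> {0..V}"
    show "((\<lambda>x. b x - bsol x) has_real_derivative phi_ext (b x) - phi_ext (bsol x)) (at x within {0..V})"
      using sol_derivs_on(1)[OF sol S x] bsol_deriv_within[of x] x
        sol_conservation[OF sol V rng x] by (auto intro: DERIV_diff)
    show "\<bar>phi_ext (b x) - phi_ext (bsol x)\<bar> \<le> Lphi * \<bar>b x - bsol x\<bar>" by (rule phi_ext_lip)
  qed (use sol bsol0 in \<open>simp add: hilt_ode_sol_def\<close>)
  then show ?thesis by simp
qed

text \<open>Every solution stays in [0,1]: at the first exit time U it coincides with bsol, so
  b U < 1 and d U > 0; by continuity b is nondecreasing and below 1 shortly after U,
  contradicting the choice of U.\<close>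
lemma sol_in_unit:
  assumes sol: "hilt_ode_sol F f \<Gamma> d0 b d" and v0: "0 \<le> v0"
  shows "b v0 \<in> {0..1}"
proof (rule ccontr)
  assume nv0: "b v0 \<notin> {0..1}"
  have bder: "(b has_real_derivative d v) (at v within {0..})" if "0 \<le> v" for v
    using sol that unfolding hilt_ode_sol_def by auto
  have bc: "continuous (at v within {0..}) b" if "0 \<le> v" for v
    using bder[OF that] by (rule DERIV_continuous)
  have dc: "continuous (at v within {0..}) d" if "0 \<le> v" for v
    using sol that unfolding hilt_ode_sol_def by (blast intro: DERIV_continuous)
  have b0: "b 0 \<in> {0..1}" using sol unfolding hilt_ode_sol_def by simp
  obtain U where U0: "0 \<le> U" and rngU: "\<And>v. v \<in> {0..U} \<Longrightarrow> b v \<in> {0..1}"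
    and leave: "\<And>\<delta>. 0 < \<delta> \<Longrightarrow> \<exists>s. U \<le> s \<and> s < U + \<delta> \<and> b s \<notin> {0..1}"
    using first_exit_unit[OF bc b0 v0 nv0] by blast
  have U: "U \<in> {0..U}" using U0 by simp
  have bU: "b U = bsol U" by (rule sol_eq_bsol[OF sol U0 rngU U])
  have dU: "d U = phi_ext (bsol U)" using sol_conservation[OF sol U0 rngU U] bU by simp
  have bU1: "b U < 1" using bU bsol_nonneg[OF U0] b_star_props(2) by simp
  have dU0: "0 < d U" using dU bsol_nonneg[OF U0] b_star_props(4) by simp
  obtain \<delta>1 where \<delta>1: "0 < \<delta>1" "\<And>v. v \<in> {0..} \<Longrightarrow> dist v U < \<delta>1 \<Longrightarrow> dist (b v) (b U) < 1 - b U"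
    using bc[OF U0] bU1 unfolding continuous_within_eps_delta by (meson diff_gt_0_iff_gt)
  obtain \<delta>2 where \<delta>2: "0 < \<delta>2" "\<And>v. v \<in> {0..} \<Longrightarrow> dist v U < \<delta>2 \<Longrightarrow> dist (d v) (d U) < d U"
    using dc[OF U0] dU0 unfolding continuous_within_eps_delta by meson
  obtain s where s: "U \<le> s" "s < U + min \<delta>1 \<delta>2" "b s \<notin> {0..1}"
    using leave[of "min \<delta>1 \<delta>2"] \<delta>1 \<delta>2 by auto
  have "dist s U < \<delta>1" using s(1,2) by (simp add: dist_real_def)
  then have bs1: "b s < 1" using \<delta>1(2)[of s] s U0 by (auto simp: dist_real_def)
  have "- b s \<le> - b U"
  proof (rule DERIV_within_nonpos_decreasing[OF s(1)])
    fix x assume x: "x \<in> {U..s}"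
    then have x0: "0 \<le> x" using U0 by simp
    show "((\<lambda>v. - b v) has_real_derivative - d x) (at x within {U..s})"
      using has_field_derivative_subset[OF bder[OF x0], of "{U..s}"] U0
      by (auto intro!: derivative_intros)
    have "dist x U < \<delta>2" using x s(1,2) by (auto simp: dist_real_def)
    then have "dist (d x) (d U) < d U" using \<delta>2(2)[of x] x0 by simp
    then show "- d x \<le> 0" by (simp add: dist_real_def)
  qed
  then show False using rngU[OF U] bs1 s(3) by simp
qed

lemma sol_unique:
  assumes sol: "hilt_ode_sol F f \<Gamma> d0 b d" and u: "0 \<le> u"
  shows "b u = bsol u \<and> d u = phi_ext (bsol u)"
proof -
  have rng: "\<And>v. v \<in> {0..u} \<Longrightarrow> b v \<in> {0..1}" using sol_in_unit[OF sol] by simp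
  have "u \<in> {0..u}" using u by simp
  then show ?thesis
    using sol_eq_bsol[OF sol u rng] sol_conservation[OF sol u rng] by simp
qed

end
context hilt_model begin

text \<open>The d-component of the solution and the right-hand side of the d-equation; Ld bounds
  the latter on [0,1]^2 (hence is a Lipschitz constant of dsol) and LG is its Lipschitz
  constant there.\<close>
definition dsol :: "real \<Rightarrow> real" where "dsol u = phi_ext (bsol u)"
definition rhs_d :: "real \<Rightarrow> real \<Rightarrow> real" where "rhs_d x y = h (\<Gamma> * x) * \<Gamma> * y * (1 - x - y) - y"
definition LG :: real where "LG = Lh * \<Gamma>^2 + 2 * Bh * \<Gamma> + 1"
definition Ld :: real where "Ld = Bh * \<Gamma> + 1"

lemma LG_nonneg: "0 \<le> LG" unfolding LG_def using Lh_nonneg Bh_nonneg \<Gamma> by simp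
lemma Ld_nonneg: "0 \<le> Ld" unfolding Ld_def using Bh_nonneg \<Gamma> by simp

text \<open>The solution stays in the simplex; the relay fraction 1 - b - d is given by the
  conservation law.\<close>
lemma bd_range: assumes "0 \<le> u"
  shows "bsol u \<in> {0..1}" "dsol u \<in> {0..1}" "1 - bsol u - dsol u \<in> {0..1}"
proof -
  show b: "bsol u \<in> {0..1}" using bsol_range[OF assms] .
  have "0 < dsol u" unfolding dsol_def using b_star_props(4) bsol_nonneg[OF assms] by simp
  moreover have e: "1 - bsol u - dsol u = (1 - d0) * (1 - F (\<Gamma> * bsol u))"
    unfolding dsol_def phi_ext_in[OF b] by simp
  moreover have "(1 - d0) * (1 - F (\<Gamma> * bsol u)) \<in> {0..1}"
    using d0 F_le1[of "\<Gamma> * bsol u"] F_nonneg[of "\<Gamma> * bsol u"]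
    by (auto intro: mult_le_one mult_nonneg_nonneg)
  ultimately show "dsol u \<in> {0..1}" "1 - bsol u - dsol u \<in> {0..1}" using b by auto
qed

lemma sol_derivs: assumes "0 \<le> u"
  shows "(bsol has_real_derivative dsol u) (at u within {0..})"
        "(dsol has_real_derivative rhs_d (bsol u) (dsol u)) (at u within {0..})"
  using sol_exists assms unfolding hilt_ode_sol_def dsol_def[abs_def] rhs_d_def by auto

lemma logistic_factor_bounds:
  fixes x y x' y' :: real
  assumes "x \<in> {0..1}" "y \<in> {0..1}" "x' \<in> {0..1}" "y' \<in> {0..1}"
  shows "\<bar>y * (1 - x - y)\<bar> \<le> 1"
    "\<bar>y * (1 - x - y) - y' * (1 - x' - y')\<bar> \<le> \<bar>x - x'\<bar> + 2 * \<bar>y - y'\<bar>"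
proof -
  have c: "\<bar>1 - x - y\<bar> \<le> 1" using assms by auto
  then show "\<bar>y * (1 - x - y)\<bar> \<le> 1" using assms by (auto simp: abs_mult intro: mult_le_one)
  have "y * (1 - x - y) - y' * (1 - x' - y') = (y - y') * (1 - x - y) + y' * ((x' - x) + (y' - y))"
    by (simp add: algebra_simps)
  moreover have "\<bar>(y - y') * (1 - x - y)\<bar> \<le> \<bar>y - y'\<bar>" using c by (simp add: abs_mult mult_left_le)
  moreover have "\<bar>y' * ((x' - x) + (y' - y))\<bar> \<le> 1 * \<bar>(x' - x) + (y' - y)\<bar>"
    unfolding abs_mult using assms by (intro mult_right_mono) auto
  ultimately show "\<bar>y * (1 - x - y) - y' * (1 - x' - y')\<bar> \<le> \<bar>x - x'\<bar> + 2 * \<bar>y - y'\<bar>"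
    by (smt (verit, best))
qed

lemma rhs_d_bound:
  assumes "x \<in> {0..1}" "y \<in> {0..1}"
  shows "\<bar>rhs_d x y\<bar> \<le> Ld"
proof -
  have "\<bar>h (\<Gamma> * x) * \<Gamma> * (y * (1 - x - y))\<bar> \<le> Bh * \<Gamma> * 1"
    unfolding abs_mult using h_bound[OF scaled_range(2,3)[OF assms(1)]] \<Gamma> Bh_nonneg
      logistic_factor_bounds(1)[OF assms assms]
    by (intro mult_mono) auto
  then have "\<bar>rhs_d x y\<bar> \<le> Bh * \<Gamma> + \<bar>y\<bar>" unfolding rhs_d_def
    using abs_triangle_ineq4[of "h (\<Gamma> * x) * \<Gamma> * (y * (1 - x - y))" y] by (simp add: mult.assoc)
  then show ?thesis unfolding Ld_def using assms by simp
qed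

lemma rhs_d_lip:
  assumes "x \<in> {0..1}" "y \<in> {0..1}" "x' \<in> {0..1}" "y' \<in> {0..1}"
  shows "\<bar>rhs_d x y - rhs_d x' y'\<bar> \<le> LG * (\<bar>x - x'\<bar> + \<bar>y - y'\<bar>)"
proof -
  let ?P = "y * (1 - x - y)" and ?P' = "y' * (1 - x' - y')"
  note P = logistic_factor_bounds[OF assms]
  have "\<bar>h (\<Gamma> * x) - h (\<Gamma> * x')\<bar> \<le> Lh * \<bar>\<Gamma> * x - \<Gamma> * x'\<bar>"
    using h_lip scaled_range(2,3)[OF assms(1)] scaled_range(2,3)[OF assms(3)] by blast
  also have "\<bar>\<Gamma> * x - \<Gamma> * x'\<bar> = \<Gamma> * \<bar>x - x'\<bar>" using \<Gamma> by (simp add: abs_mult right_diff_distrib[symmetric])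
  finally have hl: "\<bar>h (\<Gamma> * x) - h (\<Gamma> * x')\<bar> \<le> Lh * (\<Gamma> * \<bar>x - x'\<bar>)" .
  have hb: "\<bar>h (\<Gamma> * x')\<bar> \<le> Bh" using h_bound scaled_range(2,3)[OF assms(3)] by blast
  have eq: "rhs_d x y - rhs_d x' y' = (h (\<Gamma> * x) - h (\<Gamma> * x')) * \<Gamma> * ?P + h (\<Gamma> * x') * \<Gamma> * (?P - ?P') - (y - y')"
    unfolding rhs_d_def by (simp add: algebra_simps)
  have t1: "\<bar>(h (\<Gamma> * x) - h (\<Gamma> * x')) * \<Gamma> * ?P\<bar> \<le> Lh * (\<Gamma> * \<bar>x - x'\<bar>) * \<Gamma> * 1"
    unfolding abs_mult using hl P(1) \<Gamma> Lh_nonneg by (intro mult_mono) auto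
  have t2: "\<bar>h (\<Gamma> * x') * \<Gamma> * (?P - ?P')\<bar> \<le> Bh * \<Gamma> * (\<bar>x - x'\<bar> + 2 * \<bar>y - y'\<bar>)"
    unfolding abs_mult using hb P(2) \<Gamma> Bh_nonneg by (intro mult_mono) auto
  have "\<bar>rhs_d x y - rhs_d x' y'\<bar>
      \<le> (Lh * \<Gamma>^2 + Bh * \<Gamma>) * \<bar>x - x'\<bar> + (2 * Bh * \<Gamma> + 1) * \<bar>y - y'\<bar>"
    unfolding eq using t1 t2 by (simp add: power2_eq_square algebra_simps abs_le_iff) linarith
  also have "\<dots> \<le> LG * \<bar>x - x'\<bar> + LG * \<bar>y - y'\<bar>"
  proof (intro add_mono mult_right_mono)
    have "0 \<le> Bh * \<Gamma>" "0 \<le> Lh * \<Gamma>^2" using Bh_nonneg Lh_nonneg \<Gamma> by auto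
    then show "Lh * \<Gamma>^2 + Bh * \<Gamma> \<le> LG" "2 * Bh * \<Gamma> + 1 \<le> LG" unfolding LG_def by linarith+
  qed auto
  finally show ?thesis by (simp add: algebra_simps)
qed

lemma bsol_lip: assumes "0 \<le> s" "0 \<le> t" shows "\<bar>bsol s - bsol t\<bar> \<le> \<bar>s - t\<bar>"
proof -
  have "norm (bsol s - bsol t) \<le> 1 * norm (s - t)"
  proof (rule field_differentiable_bound[of "{0..}" bsol dsol])
    fix z :: real assume "z \<in> {0..}"
    then show "(bsol has_field_derivative dsol z) (at z within {0..})" using sol_derivs by simp
    show "norm (dsol z) \<le> 1" using bd_range(2)[of z] \<open>z \<in> {0..}\<close> by auto
  qed (use assms in auto)
  then show ?thesis by simp
qed

lemma dsol_lip: assumes "0 \<le> s" "0 \<le> t" shows "\<bar>dsol s - dsol t\<bar> \<le> Ld * \<bar>s - t\<bar>"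
proof -
  have "norm (dsol s - dsol t) \<le> Ld * norm (s - t)"
  proof (rule field_differentiable_bound[of "{0..}" dsol "\<lambda>z. rhs_d (bsol z) (dsol z)"])
    fix z :: real assume "z \<in> {0..}"
    then show "(dsol has_field_derivative rhs_d (bsol z) (dsol z)) (at z within {0..})" using sol_derivs by simp
    show "norm (rhs_d (bsol z) (dsol z)) \<le> Ld" using rhs_d_bound bd_range \<open>z \<in> {0..}\<close> by auto
  qed (use assms in auto)
  then show ?thesis by simp
qed

lemma resid_b: assumes t: "0 \<le> t" and \<tau>: "0 \<le> \<tau>"
  shows "\<bar>bsol (t + \<tau>) - bsol t - \<tau> * dsol t\<bar> \<le> Ld * \<tau>^2"
proof -
  let ?g = "\<lambda>s. bsol s - s * dsol t"
  have "norm (?g (t + \<tau>) - ?g t) \<le> (Ld * \<tau>) * norm (t + \<tau> - t)"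
  proof (rule field_differentiable_bound[of "{t..t+\<tau>}" ?g "\<lambda>s. dsol s - dsol t"])
    fix z :: real assume z: "z \<in> {t..t+\<tau>}"
    then have z0: "0 \<le> z" using t by simp
    have "(bsol has_field_derivative dsol z) (at z within {t..t+\<tau>})"
      using has_field_derivative_subset[OF sol_derivs(1)[OF z0]] t by auto
    then show "(?g has_field_derivative dsol z - dsol t) (at z within {t..t+\<tau>})"
      by (auto intro!: derivative_eq_intros)
    have "\<bar>dsol z - dsol t\<bar> \<le> Ld * \<bar>z - t\<bar>" by (rule dsol_lip[OF z0 t])
    also have "\<dots> \<le> Ld * \<tau>" using z Ld_nonneg by (intro mult_left_mono) auto
    finally show "norm (dsol z - dsol t) \<le> Ld * \<tau>" by simp
  qed (use \<tau> in auto)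
  then show ?thesis using \<tau> by (simp add: power2_eq_square algebra_simps)
qed

lemma resid_d: assumes t: "0 \<le> t" and \<tau>: "0 \<le> \<tau>"
  shows "\<bar>dsol (t + \<tau>) - dsol t - \<tau> * rhs_d (bsol t) (dsol t)\<bar> \<le> LG * (1 + Ld) * \<tau>^2"
proof -
  let ?g = "\<lambda>s. dsol s - s * rhs_d (bsol t) (dsol t)"
  have "norm (?g (t + \<tau>) - ?g t) \<le> (LG * (1 + Ld) * \<tau>) * norm (t + \<tau> - t)"
  proof (rule field_differentiable_bound[of "{t..t+\<tau>}" ?g "\<lambda>s. rhs_d (bsol s) (dsol s) - rhs_d (bsol t) (dsol t)"])
    fix z :: real assume z: "z \<in> {t..t+\<tau>}"
    then have z0: "0 \<le> z" using t by simp
    have "(dsol has_field_derivative rhs_d (bsol z) (dsol z)) (at z within {t..t+\<tau>})"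
      using has_field_derivative_subset[OF sol_derivs(2)[OF z0]] t by auto
    then show "(?g has_field_derivative rhs_d (bsol z) (dsol z) - rhs_d (bsol t) (dsol t)) (at z within {t..t+\<tau>})"
      by (auto intro!: derivative_eq_intros)
    have zt: "\<bar>z - t\<bar> \<le> \<tau>" using z by auto
    have "\<bar>rhs_d (bsol z) (dsol z) - rhs_d (bsol t) (dsol t)\<bar> \<le> LG * (\<bar>bsol z - bsol t\<bar> + \<bar>dsol z - dsol t\<bar>)"
      using rhs_d_lip bd_range z0 t by blast
    also have "\<dots> \<le> LG * (\<tau> + Ld * \<tau>)"
    proof -
      have "\<bar>bsol z - bsol t\<bar> \<le> \<tau>" using bsol_lip[OF z0 t] zt by linarith
      moreover have "\<bar>dsol z - dsol t\<bar> \<le> Ld * \<tau>"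
        using dsol_lip[OF z0 t] mult_left_mono[OF zt Ld_nonneg] by linarith
      ultimately show ?thesis using LG_nonneg by (intro mult_left_mono) auto
    qed
    finally show "norm (rhs_d (bsol z) (dsol z) - rhs_d (bsol t) (dsol t)) \<le> LG * (1 + Ld) * \<tau>"
      by (simp add: algebra_simps)
  qed (use \<tau> in auto)
  then show ?thesis using \<tau> by (simp add: power2_eq_square algebra_simps)
qed


text \<open>Both bsol and bsol + dsol are nondecreasing; the chain has the same monotonicity, which
  is what allows us to control a supremum over [0,T] by finitely many times.\<close>
lemma bsol_mono: assumes "0 \<le> s" "s \<le> t" shows "bsol s \<le> bsol t"
proof (rule DERIV_nonneg_imp_nondecreasing[OF assms(2)])
  fix x assume "s \<le> x" "x \<le> t"
  then have x: "0 \<le> x" using assms by simp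
  have "(bsol has_real_derivative phi_ext (bsol x)) (at x)" using bsol_deriv[of x] tmap_half_neg x by simp
  moreover have "0 \<le> phi_ext (bsol x)" using bd_range(2)[OF x] unfolding dsol_def by simp
  ultimately show "\<exists>y. (bsol has_real_derivative y) (at x) \<and> 0 \<le> y" by blast
qed

lemma sum_sol_eq: "0 \<le> t \<Longrightarrow> bsol t + dsol t = 1 - (1 - d0) * (1 - F (\<Gamma> * bsol t))"
  unfolding dsol_def using phi_ext_in[OF bd_range(1)] by simp

lemma sum_sol_mono: assumes "0 \<le> s" "s \<le> t" shows "bsol s + dsol s \<le> bsol t + dsol t"
proof -
  have "F (\<Gamma> * bsol s) \<le> F (\<Gamma> * bsol t)"
    using bsol_mono[OF assms] \<Gamma> by (intro F_mono mult_left_mono) auto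
  have t0: "0 \<le> t" using assms by simp
  have "(1 - d0) * (1 - F (\<Gamma> * bsol t)) \<le> (1 - d0) * (1 - F (\<Gamma> * bsol s))"
    using \<open>F (\<Gamma> * bsol s) \<le> F (\<Gamma> * bsol t)\<close> d0 by (intro mult_left_mono) auto
  then show ?thesis unfolding sum_sol_eq[OF assms(1)] sum_sol_eq[OF t0] by simp
qed
end
context hilt_model begin

section \<open>One step of the chain\<close>

text \<open>gam N is the influence weight \<gamma>_N, and pc N j c the probability that a relay becomes a
  destination when c of the infectious destinations exert their influence in state (j, m).\<close>
definition gam :: "nat \<Rightarrow> real" where "gam N = gammaN \<Gamma> N"
definition pc :: "nat \<Rightarrow> nat \<Rightarrow> nat \<Rightarrow> real" where
  "pc N j c = (F (gam N * real (j + c)) - F (gam N * real j)) / (1 - F (gam N * real j))"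

lemma step_eq: "hilt_step F \<Gamma> N (j, m) =
  binomial_pmf m (1 / real N) \<bind> (\<lambda>c. binomial_pmf (N - j - m) (pc N j c) \<bind> (\<lambda>e. return_pmf (j + c, m - c + e)))"
  unfolding hilt_step_def pc_def gam_def by simp

lemma gam_pos: "2 \<le> N \<Longrightarrow> 0 < gam N"
  unfolding gam_def gammaN_def using \<Gamma> by simp

lemma gam_le: assumes "2 \<le> N" shows "gam N \<le> 2 * \<Gamma> / N"
proof -
  have "real N \<le> 2 * (real N - 1)" using assms by simp
  then have "\<Gamma> * real N \<le> 2 * \<Gamma> * (real N - 1)" using \<Gamma> by (simp add: mult_left_mono)
  moreover have "0 < real N - 1" "0 < real N" using assms by auto
  ultimately show ?thesis unfolding gam_def gammaN_def by (simp add: field_simps)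
qed

lemma q_range: "1 / real N \<in> {0..1}"
  by (cases N) auto

lemma pc_range: assumes "2 \<le> N" shows "pc N j c \<in> {0..1}"
proof -
  have g: "0 \<le> gam N" using gam_pos[OF assms] by simp
  have num0: "0 \<le> F (gam N * real (j + c)) - F (gam N * real j)"
    using F_mono[of "gam N * real j" "gam N * real (j + c)"] g by (simp add: mult_left_mono)
  have num1: "F (gam N * real (j + c)) - F (gam N * real j) \<le> 1 - F (gam N * real j)"
    using F_le1 by simp
  show ?thesis
  proof (cases "1 - F (gam N * real j) = 0")
    case True then show ?thesis unfolding pc_def by simp
  next
    case False
    then have "0 < 1 - F (gam N * real j)" using F_le1[of "gam N * real j"] by linarith
    then show ?thesis unfolding pc_def using num0 num1 by (simp add: divide_le_eq_1)
  qed
qed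

lemma step_fin: assumes "2 \<le> N" shows "finite (set_pmf (hilt_step F \<Gamma> N s))"
proof -
  obtain j m where s: "s = (j, m)" by (cases s)
  show ?thesis unfolding s step_eq using q_range pc_range[OF assms]
    by (auto simp: set_bind_pmf intro!: finite_UN_I)
qed

lemma step_supp:
  assumes N: "2 \<le> N" and v: "j + m \<le> N" and s': "s' \<in> set_pmf (hilt_step F \<Gamma> N (j, m))"
  shows "j \<le> fst s' \<and> fst s' \<le> j + m \<and> j + m \<le> fst s' + snd s' \<and> fst s' + snd s' \<le> N"
proof -
  from s' obtain c e where c: "c \<in> set_pmf (binomial_pmf m (1 / real N))"
    and e: "e \<in> set_pmf (binomial_pmf (N - j - m) (pc N j c))" and s'eq: "s' = (j + c, m - c + e)"
    unfolding step_eq by (auto simp: set_bind_pmf)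
  have cm: "c \<le> m" by (rule binom_set[OF q_range c])
  have en: "e \<le> N - j - m" by (rule binom_set[OF pc_range[OF N] e])
  show ?thesis using cm en v unfolding s'eq by auto
qed

lemma E_step:
  assumes N: "2 \<le> N"
  shows "E (hilt_step F \<Gamma> N (j, m)) g =
    E (binomial_pmf m (1 / real N)) (\<lambda>c. E (binomial_pmf (N - j - m) (pc N j c)) (\<lambda>e. g (j + c, m - c + e)))"
proof -
  have "E (hilt_step F \<Gamma> N (j, m)) g =
    E (binomial_pmf m (1 / real N)) (\<lambda>c. E (binomial_pmf (N - j - m) (pc N j c) \<bind> (\<lambda>e. return_pmf (j + c, m - c + e))) g)"
    unfolding step_eq using q_range pc_range[OF N]
    by (subst E_bind) (auto simp: set_bind_pmf intro!: finite_UN_I)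
  also have "\<dots> = E (binomial_pmf m (1 / real N)) (\<lambda>c. E (binomial_pmf (N - j - m) (pc N j c)) (\<lambda>e. g (j + c, m - c + e)))"
    using pc_range[OF N] by (intro E_cong) (subst E_bind, auto)
  finally show ?thesis .
qed

lemma chain_supp:
  assumes N: "2 \<le> N" and s0: "fst s0 + snd s0 \<le> N"
  shows "finite (set_pmf (hilt_chain F \<Gamma> N s0 k)) \<and> (\<forall>s\<in>set_pmf (hilt_chain F \<Gamma> N s0 k). fst s + snd s \<le> N)"
proof (induction k)
  case 0 then show ?case using s0 by simp
next
  case (Suc k)
  have fin: "finite (set_pmf (hilt_chain F \<Gamma> N s0 (Suc k)))"
    using Suc step_fin[OF N] by (auto simp: set_bind_pmf intro!: finite_UN_I)
  have "fst s' + snd s' \<le> N" if "s' \<in> set_pmf (hilt_chain F \<Gamma> N s0 (Suc k))" for s'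
  proof -
    from that obtain s where s: "s \<in> set_pmf (hilt_chain F \<Gamma> N s0 k)" "s' \<in> set_pmf (hilt_step F \<Gamma> N s)"
      by (auto simp: set_bind_pmf)
    obtain j m where jm: "s = (j, m)" by (cases s)
    have "j + m \<le> N" using Suc s jm by auto
    then show ?thesis using step_supp[OF N _ s(2)[unfolded jm]] by auto
  qed
  then show ?case using fin by blast
qed

lemma E_chain_Suc:
  assumes N: "2 \<le> N" and s0: "fst s0 + snd s0 \<le> N"
  shows "E (hilt_chain F \<Gamma> N s0 (Suc k)) g = E (hilt_chain F \<Gamma> N s0 k) (\<lambda>s. E (hilt_step F \<Gamma> N s) g)"
  using chain_supp[OF N s0, of k] step_fin[OF N] by (simp add: E_bind)

lemma path_valid:
  assumes N: "2 \<le> N" and s0: "fst s0 + snd s0 \<le> N" and xs: "xs \<in> set_pmf (hilt_path F \<Gamma> N s0 n)"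
  shows "i \<le> n \<Longrightarrow> fst (xs ! i) + snd (xs ! i) \<le> N"
proof (induction i)
  case 0 then show ?case using path_0[OF xs] s0 by simp
next
  case (Suc i)
  then have "xs ! Suc i \<in> set_pmf (hilt_step F \<Gamma> N (xs ! i))" using path_step[OF xs] by simp
  then show ?case using step_supp[OF N, of "fst (xs ! i)" "snd (xs ! i)"] Suc by auto
qed

lemma path_mono:
  assumes N: "2 \<le> N" and s0: "fst s0 + snd s0 \<le> N" and xs: "xs \<in> set_pmf (hilt_path F \<Gamma> N s0 n)"
    and ii: "i \<le> i'" "i' \<le> n"
  shows "fst (xs ! i) \<le> fst (xs ! i') \<and> fst (xs ! i) + snd (xs ! i) \<le> fst (xs ! i') + snd (xs ! i')"
  using ii
proof (induction i' rule: dec_induct)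
  case base then show ?case by simp
next
  case (step k)
  have v: "fst (xs ! k) + snd (xs ! k) \<le> N" using path_valid[OF N s0 xs] step by simp
  have "xs ! Suc k \<in> set_pmf (hilt_step F \<Gamma> N (xs ! k))" using path_step[OF xs] step by simp
  then have "fst (xs ! k) \<le> fst (xs ! Suc k) \<and> fst (xs ! k) + snd (xs ! k) \<le> fst (xs ! Suc k) + snd (xs ! Suc k)"
    using step_supp[OF N v, of "xs ! Suc k"] by simp
  then show ?case using step by auto
qed

definition N0 :: nat where "N0 = nat \<lceil>G2 / (G2 - \<Gamma>)\<rceil> + 2"

lemma N0: assumes "N0 \<le> N" shows "2 \<le> N" "gam N * real N \<le> G2"
proof -
  show N2: "2 \<le> N" using assms unfolding N0_def by simp
  have d: "0 < G2 - \<Gamma>" using G2 by simp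
  have "G2 / (G2 - \<Gamma>) \<le> real (nat \<lceil>G2 / (G2 - \<Gamma>)\<rceil>)" by (rule real_nat_ceiling_ge)
  also have "\<dots> \<le> real N"
  proof -
    have "nat \<lceil>G2 / (G2 - \<Gamma>)\<rceil> \<le> N" using assms unfolding N0_def by linarith
    then show ?thesis by (simp only: of_nat_le_iff)
  qed
  finally have "G2 \<le> real N * (G2 - \<Gamma>)" using d by (simp add: divide_le_eq)
  then have "\<Gamma> * real N \<le> G2 * (real N - 1)" by (simp add: algebra_simps)
  moreover have "0 < real N - 1" using N2 by simp
  ultimately show "gam N * real N \<le> G2" unfolding gam_def gammaN_def by (simp add: divide_le_eq)
qed

lemma gam_j: assumes "N0 \<le> N" "j \<le> N" shows "0 \<le> gam N * real j" "gam N * real j \<le> G2"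
proof -
  have g: "0 < gam N" using gam_pos N0(1)[OF assms(1)] by simp
  then show "0 \<le> gam N * real j" by simp
  have "gam N * real j \<le> gam N * real N" using g assms(2) by simp
  then show "gam N * real j \<le> G2" using N0(2)[OF assms(1)] by simp
qed

lemma gam_diff: assumes "2 \<le> N" shows "gam N - \<Gamma> / real N = gam N / real N"
  using assms unfolding gam_def gammaN_def by (simp add: field_simps)

definition \<Delta> :: real where "\<Delta> = \<Gamma>' - G2"
lemma \<Delta>_pos: "0 < \<Delta>" unfolding \<Delta>_def using G2 by simp

definition K4 :: real where "K4 = max Bf (1 / \<Delta>)"
definition Mt :: real where "Mt = Kf' + 1 / \<Delta>^2 + Bf / \<Delta>"

lemma K4_nonneg: "0 \<le> K4" unfolding K4_def using Bf_nonneg by simp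
lemma Mt_nonneg: "0 \<le> Mt" unfolding Mt_def using Bf_nonneg Kf'_nonneg \<Delta>_pos by simp

text \<open>For increments leaving [0,\<Gamma>'] the bounds follow from
  0 \<le> F \<le> 1 since such increments are at least \<Delta>.\<close>
lemma Fdiff_bounds:
  assumes x: "0 \<le> x" "x \<le> G2" and t: "0 \<le> t"
  shows "0 \<le> F (x + t) - F x" "F (x + t) - F x \<le> K4 * t"
    "\<bar>F (x + t) - F x - f x * t\<bar> \<le> Mt * t^2"
proof -
  show "0 \<le> F (x + t) - F x" using F_mono[of x "x + t"] t by simp
  have xi: "x \<in> {0..\<Gamma>'}" using x G2 by simp
  have fx: "\<bar>f x\<bar> \<le> Bf" using Bf[OF xi] .
  have "F (x + t) - F x \<le> K4 * t \<and> \<bar>F (x + t) - F x - f x * t\<bar> \<le> Mt * t^2"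
  proof (cases "x + t \<le> \<Gamma>'")
    case True
    have "\<bar>F (x + t) - F x\<bar> \<le> Bf * \<bar>x + t - x\<bar>" by (rule F_lip) (use True x t xi in auto)
    then have a: "F (x + t) - F x \<le> Bf * t" using t by simp
    have "Bf \<le> K4" unfolding K4_def by simp
    from mult_right_mono[OF this t] have "Bf * t \<le> K4 * t" .
    moreover have "\<bar>F (x + t) - F x - f x * (x + t - x)\<bar> \<le> Kf' * (x + t - x)^2"
      by (rule F_taylor) (use x t True in auto)
    moreover have "Kf' * t^2 \<le> Mt * t^2" unfolding Mt_def using \<Delta>_pos Bf_nonneg
      by (intro mult_right_mono) auto
    ultimately show ?thesis using a by simp
  next
    case False
    then have tD: "\<Delta> \<le> t" unfolding \<Delta>_def using x by simp
    have tD1: "1 \<le> t / \<Delta>" using tD \<Delta>_pos by simp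
    have d1: "F (x + t) - F x \<le> 1" using F_le1[of "x + t"] F_nonneg[of x] by simp
    have "1 / \<Delta> \<le> K4" unfolding K4_def by simp
    from mult_right_mono[OF this t] have "1 / \<Delta> * t \<le> K4 * t" .
    then have a: "F (x + t) - F x \<le> K4 * t" using d1 tD1 by simp
    have sq: "1 \<le> t^2 / \<Delta>^2" using tD1 by (simp add: power_divide[symmetric] one_le_power)
    have lin: "t \<le> t^2 / \<Delta>" using tD1 t \<Delta>_pos by (simp add: power2_eq_square field_simps)
    have "\<bar>F (x + t) - F x - f x * t\<bar> \<le> \<bar>F (x + t) - F x\<bar> + \<bar>f x\<bar> * t"
    proof -
      have "\<bar>F (x + t) - F x - f x * t\<bar> \<le> \<bar>F (x + t) - F x\<bar> + \<bar>f x * t\<bar>" by (rule abs_triangle_ineq4)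
      also have "\<bar>f x * t\<bar> = \<bar>f x\<bar> * t" using t by (simp add: abs_mult)
      finally show ?thesis .
    qed
    also have "\<dots> \<le> 1 + Bf * t" using d1 \<open>0 \<le> F (x + t) - F x\<close> fx t
      by (intro add_mono mult_right_mono) auto
    also have "\<dots> \<le> t^2 / \<Delta>^2 + Bf * (t^2 / \<Delta>)"
      using sq lin Bf_nonneg by (intro add_mono mult_left_mono) auto
    also have "\<dots> = (1 / \<Delta>^2 + Bf / \<Delta>) * t^2" by (simp add: field_simps)
    also have "\<dots> \<le> Mt * t^2" unfolding Mt_def using Kf'_nonneg by (intro mult_right_mono) auto
    finally show ?thesis using a by simp
  qed
  then show "F (x + t) - F x \<le> K4 * t" "\<bar>F (x + t) - F x - f x * t\<bar> \<le> Mt * t^2" by auto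
qed

definition K3 :: real where "K3 = 2 * \<Gamma> * K4 / \<kappa>"
definition Cq :: real where "Cq = 4 * \<Gamma>^2 * Mt / \<kappa>"

lemma K3_nonneg: "0 \<le> K3" unfolding K3_def using \<Gamma> K4_nonneg \<kappa>_pos by simp
lemma Cq_nonneg: "0 \<le> Cq" unfolding Cq_def using \<Gamma> Mt_nonneg \<kappa>_pos by simp

lemma npc_bounds:
  assumes N: "N0 \<le> N" and v: "j + m \<le> N"
  shows "0 \<le> real (N - j - m) * pc N j c"
        "real (N - j - m) * pc N j c \<le> K3 * real c"
        "\<bar>real (N - j - m) * pc N j c - real (N - j - m) * h (gam N * real j) * (gam N * real c)\<bar>
           \<le> Cq * (real c)^2 / real N"
proof -
  have N2: "2 \<le> N" using N0(1)[OF N] .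
  let ?x = "gam N * real j" and ?t = "gam N * real c" and ?n = "real (N - j - m)"
  have x: "0 \<le> ?x" "?x \<le> G2" using gam_j[OF N] v by auto
  have g: "0 < gam N" using gam_pos[OF N2] .
  have t0: "0 \<le> ?t" using g by simp
  have tle: "?t \<le> 2 * \<Gamma> * real c / real N"
    using mult_right_mono[OF gam_le[OF N2], of "real c"] by simp
  have den: "\<kappa> \<le> 1 - F ?x" using one_minus_F_ge[OF x(2)] .
  have denp: "0 < 1 - F ?x" using den \<kappa>_pos by simp
  have nN: "?n \<le> real N" by simp
  have n0: "0 \<le> ?n" by simp
  have Np: "0 < real N" using N2 by simp
  have eqx: "gam N * real (j + c) = ?x + ?t" by (simp add: algebra_simps)
  have pc_eq: "pc N j c = (F (?x + ?t) - F ?x) / (1 - F ?x)" unfolding pc_def eqx ..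
  note fb = Fdiff_bounds[OF x t0]
  have pc0: "0 \<le> pc N j c" unfolding pc_eq using fb(1) denp by simp
  then show "0 \<le> ?n * pc N j c" by simp
  have "pc N j c \<le> K4 * ?t / \<kappa>"
    unfolding pc_eq using fb(1,2) den \<kappa>_pos K4_nonneg t0 by (intro frac_le) auto
  then have "?n * pc N j c \<le> real N * (K4 * ?t / \<kappa>)"
    using pc0 nN by (intro mult_mono) (auto intro!: divide_nonneg_pos mult_nonneg_nonneg K4_nonneg t0 \<kappa>_pos)
  also have "\<dots> \<le> real N * (K4 * (2 * \<Gamma> * real c / real N) / \<kappa>)"
    using tle K4_nonneg \<kappa>_pos Np by (intro mult_left_mono divide_right_mono) auto
  also have "\<dots> = K3 * real c" unfolding K3_def using Np by (simp add: field_simps)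
  finally show "?n * pc N j c \<le> K3 * real c" .
  have "?n * pc N j c - ?n * h ?x * ?t = ?n * (F (?x + ?t) - F ?x - f ?x * ?t) / (1 - F ?x)"
    unfolding pc_eq hazard_def using denp by (simp add: diff_divide_distrib right_diff_distrib)
  then have "\<bar>?n * pc N j c - ?n * h ?x * ?t\<bar> = ?n * \<bar>F (?x + ?t) - F ?x - f ?x * ?t\<bar> / (1 - F ?x)"
    using denp by (simp add: abs_mult)
  also have "\<dots> \<le> real N * (Mt * ?t^2) / \<kappa>"
    using fb(3) nN n0 den \<kappa>_pos Mt_nonneg by (intro frac_le mult_mono) auto
  also have "\<dots> \<le> real N * (Mt * (2 * \<Gamma> * real c / real N)^2) / \<kappa>"
    using tle t0 Mt_nonneg \<kappa>_pos Np by (intro divide_right_mono mult_left_mono power_mono) auto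
  also have "\<dots> = Cq * (real c)^2 / real N" unfolding Cq_def using Np by (simp add: field_simps power2_eq_square)
  finally show "\<bar>?n * pc N j c - ?n * h ?x * ?t\<bar> \<le> Cq * (real c)^2 / real N" .
qed

lemma c_moments:
  assumes "m \<le> N"
  shows "E (binomial_pmf m (1 / real N)) real = real m / real N"
        "E (binomial_pmf m (1 / real N)) (\<lambda>c. (real c)^2) \<le> 2"
proof -
  show "E (binomial_pmf m (1 / real N)) real = real m / real N" using binom_mean[OF q_range] by simp
  have mq: "real m * (1 / real N) \<le> 1" using assms by (cases "N = 0") (auto simp: field_simps)
  have mq0: "0 \<le> real m * (1 / real N)" by simp
  have "E (binomial_pmf m (1 / real N)) (\<lambda>c. (real c)^2) \<le> real m * (1 / real N) + (real m * (1 / real N))^2"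
    by (rule binom_sq_le[OF q_range])
  also have "\<dots> \<le> 1 + 1" using mq mq0 by (intro add_mono) (auto simp: power_le_one)
  finally show "E (binomial_pmf m (1 / real N)) (\<lambda>c. (real c)^2) \<le> 2" by simp
qed

text \<open>The drift of D: the expected number of new destinations is, up to O(1/N) after scaling,
  N h(\<Gamma> j/N) \<Gamma> (m/N) ((N - j - m)/N), i.e. the infection term of the d-equation.\<close>
definition C\<eta> :: real where "C\<eta> = 2 * Cq + 4 * \<Gamma>^2 * Lh + 2 * \<Gamma> * Bh"


lemma pc_mean_approx:
  assumes N: "N0 \<le> N" and v: "j + m \<le> N"
  shows "\<bar>E (binomial_pmf m (1 / real N)) (\<lambda>c. real (N - j - m) * pc N j c)
          - real (N - j - m) * h (gam N * real j) * gam N * (real m / real N)\<bar> \<le> 2 * Cq / real N"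
proof -
  have Np: "0 < real N" using N0(1)[OF N] by simp
  let ?C = "binomial_pmf m (1 / real N)" and ?n = "real (N - j - m)" and ?x = "gam N * real j"
  have finC: "finite (set_pmf ?C)" using q_range by auto
  note cm = c_moments[of m N]
  have "E ?C (\<lambda>c. ?n * h ?x * (gam N * real c)) = ?n * h ?x * gam N * (real m / real N)"
    using cm(1) v by (simp add: mult.assoc)
  then have "\<bar>E ?C (\<lambda>c. ?n * pc N j c) - ?n * h ?x * gam N * (real m / real N)\<bar>
      = \<bar>E ?C (\<lambda>c. ?n * pc N j c - ?n * h ?x * (gam N * real c))\<bar>"
    using finC by (simp add: E_diff)
  also have "\<dots> \<le> E ?C (\<lambda>c. \<bar>?n * pc N j c - ?n * h ?x * (gam N * real c)\<bar>)" by (rule E_abs[OF finC])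
  also have "\<dots> \<le> E ?C (\<lambda>c. Cq * (real c)^2 / real N)"
    by (rule E_mono[OF finC]) (rule npc_bounds(3)[OF N v])
  also have "\<dots> = Cq / real N * E ?C (\<lambda>c. (real c)^2)" by simp
  also have "\<dots> \<le> Cq / real N * 2" using cm(2) v Cq_nonneg Np by (intro mult_left_mono) auto
  finally show ?thesis by (simp add: mult.commute)
qed

lemma hazard_weight_shift:
  assumes N: "N0 \<le> N" and jN: "j \<le> N"
  shows "\<bar>h (gam N * real j) * gam N - h (\<Gamma> * (real j / real N)) * (\<Gamma> / real N)\<bar>
           \<le> (4 * \<Gamma>^2 * Lh + 2 * \<Gamma> * Bh) / (real N)^2"
proof -
  have N2: "2 \<le> N" using N0(1)[OF N] .
  have Np: "0 < real N" using N2 by simp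
  let ?x = "gam N * real j" and ?y = "\<Gamma> * (real j / real N)" and ?g = "gam N"
  have x: "0 \<le> ?x" "?x \<le> G2" using gam_j[OF N jN] by auto
  have "real j / real N \<in> {0..1}" using jN Np by simp
  note y = scaled_range(2,3)[OF this]
  have gd: "?g - \<Gamma> / real N = ?g / real N" by (rule gam_diff[OF N2])
  have gle: "?g \<le> 2 * \<Gamma> / real N" by (rule gam_le[OF N2])
  have g0: "0 < ?g" by (rule gam_pos[OF N2])
  have "?x - ?y = real j * (?g - \<Gamma> / real N)" by (simp add: algebra_simps)
  then have "\<bar>?x - ?y\<bar> = real j / real N * ?g" using gd g0 by (simp add: abs_mult)
  also have "\<dots> \<le> 1 * ?g" using jN Np g0 by (intro mult_right_mono) auto
  finally have "\<bar>?x - ?y\<bar> \<le> 2 * \<Gamma> / real N" using gle by simp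
  then have hl: "\<bar>h ?x - h ?y\<bar> \<le> Lh * (2 * \<Gamma> / real N)"
    using h_lip[OF x y] Lh_nonneg by (meson mult_left_mono order_trans)
  have hy: "\<bar>h ?y\<bar> \<le> Bh" by (rule h_bound[OF y])
  have "h ?x * ?g - h ?y * (\<Gamma> / real N) = ?g * (h ?x - h ?y) + h ?y * (?g - \<Gamma> / real N)"
    by (simp add: algebra_simps)
  then have "h ?x * ?g - h ?y * (\<Gamma> / real N) = ?g * (h ?x - h ?y) + h ?y * (?g / real N)"
    unfolding gd .
  then have "\<bar>h ?x * ?g - h ?y * (\<Gamma> / real N)\<bar> \<le> ?g * \<bar>h ?x - h ?y\<bar> + \<bar>h ?y\<bar> * (?g / real N)"
    using g0 Np abs_triangle_ineq[of "?g * (h ?x - h ?y)" "h ?y * (?g / real N)"]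
    by (simp add: abs_mult)
  also have "\<dots> \<le> (2 * \<Gamma> / real N) * (Lh * (2 * \<Gamma> / real N)) + Bh * ((2 * \<Gamma> / real N) / real N)"
    using hl hy gle g0 Np Lh_nonneg Bh_nonneg \<Gamma>
    by (intro add_mono mult_mono divide_right_mono) auto
  also have "\<dots> = (4 * \<Gamma>^2 * Lh + 2 * \<Gamma> * Bh) / (real N)^2"
    using Np by (simp add: field_simps power2_eq_square)
  finally show ?thesis .
qed

lemma drift:
  assumes N: "N0 \<le> N" and v: "j + m \<le> N"
  shows "\<bar>E (binomial_pmf m (1 / real N)) (\<lambda>c. real (N - j - m) * pc N j c)
          - h (\<Gamma> * (real j / real N)) * \<Gamma> * (real m / real N) * (real (N - j - m) / real N)\<bar> \<le> C\<eta> / real N"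
proof -
  have Np: "0 < real N" using N0(1)[OF N] by simp
  let ?n = "real (N - j - m)" and ?A = "real (N - j - m) * h (gam N * real j) * gam N * (real m / real N)"
  let ?L = "h (\<Gamma> * (real j / real N)) * \<Gamma> * (real m / real N) * (?n / real N)"
  have nm: "?n * (real m / real N) \<le> real N"
  proof -
    have "?n \<le> real N" "real m / real N \<le> 1" using v Np by auto
    then have "?n * (real m / real N) \<le> real N * 1" by (intro mult_mono) auto
    then show ?thesis by simp
  qed
  define D where "D = h (gam N * real j) * gam N - h (\<Gamma> * (real j / real N)) * (\<Gamma> / real N)"
  have "?A - ?L = ?n * (real m / real N) * D" unfolding D_def by (simp add: algebra_simps)
  then have "\<bar>?A - ?L\<bar> = ?n * (real m / real N) * \<bar>D\<bar>" by (simp add: abs_mult)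
  also have "\<dots> \<le> real N * ((4 * \<Gamma>^2 * Lh + 2 * \<Gamma> * Bh) / (real N)^2)"
    using hazard_weight_shift[OF N, of j] v nm unfolding D_def[symmetric] by (intro mult_mono) auto
  also have "\<dots> = (4 * \<Gamma>^2 * Lh + 2 * \<Gamma> * Bh) / real N" using Np by (simp add: power2_eq_square)
  finally have "\<bar>?A - ?L\<bar> \<le> (4 * \<Gamma>^2 * Lh + 2 * \<Gamma> * Bh) / real N" .
  with pc_mean_approx[OF N v] show ?thesis
    unfolding C\<eta>_def by (simp add: add_divide_distrib abs_le_iff)
qed

end
context hilt_model begin

section \<open>The error recursion\<close>

definition Cv :: real where "Cv = K3 + 2 * (K3^2 + 1)"

lemma Cv_nonneg: "0 \<le> Cv" unfolding Cv_def using K3_nonneg by simp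

lemma step_moments_b:
  assumes N: "N0 \<le> N" and v: "j + m \<le> N"
  shows "E (hilt_step F \<Gamma> N (j, m)) (\<lambda>s'. real (fst s')) = real j + real m / real N"
    "E (hilt_step F \<Gamma> N (j, m)) (\<lambda>s'. (real (fst s') - real j)^2) \<le> 2"
proof -
  have N2: "2 \<le> N" using N0(1)[OF N] .
  have finC: "finite (set_pmf (binomial_pmf m (1 / real N)))" using q_range by auto
  note cm = c_moments[of m N] and Es = E_step[OF N2, of j m]
  show "E (hilt_step F \<Gamma> N (j, m)) (\<lambda>s'. real (fst s')) = real j + real m / real N"
    unfolding Es using finC cm(1) v by (simp add: E_const E_add)
  show "E (hilt_step F \<Gamma> N (j, m)) (\<lambda>s'. (real (fst s') - real j)^2) \<le> 2"
    unfolding Es using cm(2) v by (simp add: E_const)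
qed

text \<open>Second moment of the change of D given that c destinations exerted their influence:
  E ((E' - c)^2) \<le> E (E'^2) + c^2 with E' the number of new destinations, whose mean is O(c).\<close>
lemma new_dest_sq_moment:
  assumes N: "N0 \<le> N" and v: "j + m \<le> N" and cle: "c \<le> m"
  shows "E (binomial_pmf (N - j - m) (pc N j c)) (\<lambda>e. (real (m - c + e) - real m)^2)
         \<le> K3 * real c + (K3^2 + 1) * (real c)^2"
proof -
  have N2: "2 \<le> N" using N0(1)[OF N] .
  let ?B = "binomial_pmf (N - j - m) (pc N j c)"
  have finB: "finite (set_pmf ?B)" using pc_range[OF N2] by auto
  let ?p = "pc N j c" and ?n = "real (N - j - m)"
  have "E (?B) (\<lambda>e. (real (m - c + e) - real m)^2) = E (?B) (\<lambda>e. (real e - real c)^2)"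
    using cle by (intro E_cong) (simp add: of_nat_diff power2_eq_square algebra_simps)
  also have "\<dots> = E (?B) (\<lambda>e. (real e)^2) - 2 * real c * E (?B) real + (real c)^2"
    by (rule E_sq_expand[OF finB])
  also have "\<dots> \<le> (?n * ?p + (?n * ?p)^2) - 0 + (real c)^2"
  proof -
    have "E (?B) (\<lambda>e. (real e)^2) \<le> ?n * ?p + (?n * ?p)^2"
      using binom_sq_le[OF pc_range[OF N2]] by simp
    moreover have "0 \<le> 2 * real c * E (?B) real"
      using binom_mean[OF pc_range[OF N2]] pc_range[OF N2, of j c] by simp
    ultimately show ?thesis by linarith
  qed
  also have "\<dots> \<le> K3 * real c + (K3 * real c)^2 + (real c)^2"
  proof -
    have a: "?n * ?p \<le> K3 * real c" by (rule npc_bounds(2)[OF N v])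
    have b: "0 \<le> ?n * ?p" by (rule npc_bounds(1)[OF N v])
    have "(?n * ?p)^2 \<le> (K3 * real c)^2" using a b by (rule power_mono)
    then show ?thesis using a by linarith
  qed
  also have "\<dots> = K3 * real c + (K3^2 + 1) * (real c)^2" by (simp add: power_mult_distrib algebra_simps)
  finally show ?thesis .
qed

lemma step_moments_d:
  assumes N: "N0 \<le> N" and v: "j + m \<le> N"
  shows "E (hilt_step F \<Gamma> N (j, m)) (\<lambda>s'. real (snd s')) =
       real m - real m / real N + E (binomial_pmf m (1 / real N)) (\<lambda>c. real (N - j - m) * pc N j c)"
    "E (hilt_step F \<Gamma> N (j, m)) (\<lambda>s'. (real (snd s') - real m)^2) \<le> Cv"
proof -
  have N2: "2 \<le> N" using N0(1)[OF N] .
  let ?C = "binomial_pmf m (1 / real N)" and ?B = "\<lambda>c. binomial_pmf (N - j - m) (pc N j c)"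
  have finC: "finite (set_pmf ?C)" using q_range by auto
  have finB: "\<And>c. finite (set_pmf (?B c))" using pc_range[OF N2] by auto
  have mN: "m \<le> N" using v by simp
  note cm = c_moments[OF mN]
  have cle: "c \<le> m" if "c \<in> set_pmf ?C" for c by (rule binom_set[OF q_range that])
  note Es = E_step[OF N2, of j m]
  have mean_given_c: "E (?B c) (\<lambda>e. real (m - c + e)) = real m - real c + real (N - j - m) * pc N j c"
    if "c \<in> set_pmf ?C" for c
  proof -
    have "E (?B c) (\<lambda>e. real (m - c + e)) = E (?B c) (\<lambda>e. (real m - real c) + real e)"
      using cle[OF that] by (intro E_cong) (simp add: of_nat_diff)
    also have "\<dots> = real m - real c + real (N - j - m) * pc N j c"
      using finB binom_mean[OF pc_range[OF N2]] by (simp add: E_add E_const)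
    finally show ?thesis .
  qed
  have "E (hilt_step F \<Gamma> N (j, m)) (\<lambda>s'. real (snd s')) =
        E ?C (\<lambda>c. real m - real c + real (N - j - m) * pc N j c)"
    unfolding Es
  proof (intro E_cong)
    fix c assume c: "c \<in> set_pmf ?C"
    show "E (?B c) (\<lambda>e. real (snd (j + c, m - c + e))) = real m - real c + real (N - j - m) * pc N j c"
      using mean_given_c[OF c] by simp
  qed
  also have "\<dots> = real m - real m / real N + E ?C (\<lambda>c. real (N - j - m) * pc N j c)"
    using finC cm(1) by (simp add: E_add E_diff E_const)
  finally show "E (hilt_step F \<Gamma> N (j, m)) (\<lambda>s'. real (snd s')) =
       real m - real m / real N + E ?C (\<lambda>c. real (N - j - m) * pc N j c)" .
  have "E (hilt_step F \<Gamma> N (j, m)) (\<lambda>s'. (real (snd s') - real m)^2)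
        \<le> E ?C (\<lambda>c. K3 * real c + (K3^2 + 1) * (real c)^2)"
    unfolding Es
  proof (rule E_mono[OF finC])
    fix c assume c: "c \<in> set_pmf ?C"
    show "E (?B c) (\<lambda>e. (real (snd (j + c, m - c + e)) - real m)^2) \<le> K3 * real c + (K3^2 + 1) * (real c)^2"
      using new_dest_sq_moment[OF N v cle[OF c]] by simp
  qed
  also have "\<dots> = K3 * (real m / real N) + (K3^2 + 1) * E ?C (\<lambda>c. (real c)^2)"
    using finC cm(1) by (simp add: E_add)
  also have "\<dots> \<le> K3 * 1 + (K3^2 + 1) * 2"
  proof (intro add_mono mult_left_mono)
    show "real m / real N \<le> 1" using mN N2 by simp
    show "E ?C (\<lambda>c. (real c)^2) \<le> 2" by (rule cm(2))
  qed (use K3_nonneg in auto)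
  finally show "E (hilt_step F \<Gamma> N (j, m)) (\<lambda>s'. (real (snd s') - real m)^2) \<le> Cv"
    unfolding Cv_def by simp
qed



definition sq_err :: "nat \<Rightarrow> real \<Rightarrow> nat \<times> nat \<Rightarrow> real" where
  "sq_err N t s = (real (fst s) / real N - bsol t)^2 + (real (snd s) / real N - dsol t)^2"

lemma sq_err_nonneg: "0 \<le> sq_err N t s" unfolding sq_err_def by simp

text \<open>One-step error of the B component: the mean of B/N moves by m/N^2, the solution by
  dsol(t)/N + O(1/N^2), so the bias is the current D-error divided by N.\<close>
lemma err_step_b:
  assumes N: "N0 \<le> N" and v: "j + m \<le> N" and t: "0 \<le> t"
  shows "E (hilt_step F \<Gamma> N (j, m)) (\<lambda>s'. (real (fst s') / real N - bsol (t + 1 / real N))^2)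
    \<le> 2 / (real N)^2 + ((1 + 1 / real N) * (real j / real N - bsol t)^2
         + 2 * (\<bar>real m / real N - dsol t\<bar> + Ld / real N)^2 / real N)"
proof -
  have Np: "0 < real N" and N1: "1 \<le> real N" using N0(1)[OF N] by simp_all
  let ?P = "hilt_step F \<Gamma> N (j, m)" and ?\<tau> = "1 / real N"
  let ?ZB = "\<lambda>s'. real (fst s') / real N" and ?tB = "bsol (t + 1 / real N)"
  define u where "u = real j / real N - bsol t"
  define w where "w = real m / real N - dsol t"
  note sm = step_moments_b[OF N v]
  have vB: "E ?P (\<lambda>s'. (?ZB s' - real j / real N)^2) \<le> 2 / (real N)^2"
  proof -
    have "E ?P (\<lambda>s'. (?ZB s' - real j / real N)^2) = E ?P (\<lambda>s'. (real (fst s') - real j)^2) / (real N)^2"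
      by (simp add: diff_divide_distrib[symmetric] power_divide)
    also have "\<dots> \<le> 2 / (real N)^2" using sm(2) by (simp add: divide_right_mono)
    finally show ?thesis .
  qed
  have rB: "\<bar>bsol (t + ?\<tau>) - bsol t - ?\<tau> * dsol t\<bar> \<le> Ld * ?\<tau>^2" by (rule resid_b[OF t]) simp
  have "E ?P ?ZB - ?tB - u = w / real N - (bsol (t + ?\<tau>) - bsol t - ?\<tau> * dsol t)"
    using sm(1) unfolding u_def w_def using Np by (simp add: field_simps)
  then have "\<bar>E ?P ?ZB - ?tB - u\<bar> \<le> \<bar>w\<bar> / real N + Ld * ?\<tau>^2"
    using rB abs_triangle_ineq4[of "w / real N" "bsol (t + ?\<tau>) - bsol t - ?\<tau> * dsol t"] Np
    by (simp add: abs_div)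
  also have "\<dots> = (\<bar>w\<bar> + Ld / real N) / real N" using Np by (simp add: field_simps power2_eq_square)
  finally have "(E ?P ?ZB - ?tB)^2 \<le> (1 + 1 / real N) * u^2 + 2 * (\<bar>w\<bar> + Ld / real N)^2 / real N"
    by (intro sq_le_of_close[OF N1]) simp
  moreover have "E ?P (\<lambda>s'. (?ZB s' - ?tB)^2) \<le> E ?P (\<lambda>s'. (?ZB s' - real j / real N)^2) + (E ?P ?ZB - ?tB)^2"
    by (rule E_sq_shift[OF step_fin[OF N0(1)[OF N]]])
  ultimately show ?thesis using vB unfolding u_def w_def by linarith
qed

text \<open>The drift of D/N equals rhs_d at the current scaled state up to O(1/N^2), and rhs_d is
  Lipschitz, so the bias of D/N is O((|u| + |w|)/N + 1/N^2).\<close>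
lemma drift_d_close:
  assumes N: "N0 \<le> N" and v: "j + m \<le> N" and t: "0 \<le> t"
  shows "\<bar>E (hilt_step F \<Gamma> N (j, m)) (\<lambda>s'. real (snd s') / real N) - dsol (t + 1 / real N)
            - (real m / real N - dsol t)\<bar>
    \<le> (LG * (\<bar>real j / real N - bsol t\<bar> + \<bar>real m / real N - dsol t\<bar>) + C\<eta> / real N
         + LG * (1 + Ld) / real N) / real N"
proof -
  have Np: "0 < real N" using N0(1)[OF N] by simp
  let ?\<tau> = "1 / real N" and ?x = "real j / real N" and ?y = "real m / real N"
  let ?En = "E (binomial_pmf m (1 / real N)) (\<lambda>c. real (N - j - m) * pc N j c)"
  define u where "u = ?x - bsol t"
  define w where "w = ?y - dsol t"
  have xr: "?x \<in> {0..1}" "?y \<in> {0..1}" using v Np by auto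
  have "real (N - j - m) / real N = 1 - ?x - ?y"
    using v Np by (simp add: of_nat_diff field_simps)
  then have rhs: "rhs_d ?x ?y = h (\<Gamma> * ?x) * \<Gamma> * ?y * (real (N - j - m) / real N) - ?y"
    unfolding rhs_d_def by simp
  have dr: "\<bar>?En - h (\<Gamma> * ?x) * \<Gamma> * ?y * (real (N - j - m) / real N)\<bar> \<le> C\<eta> / real N"
    by (rule drift[OF N v])
  have gl: "\<bar>rhs_d ?x ?y - rhs_d (bsol t) (dsol t)\<bar> \<le> LG * (\<bar>u\<bar> + \<bar>w\<bar>)"
    unfolding u_def w_def by (rule rhs_d_lip[OF xr bd_range(1,2)[OF t]])
  have inner: "\<bar>?En - ?y - rhs_d (bsol t) (dsol t)\<bar> \<le> C\<eta> / real N + LG * (\<bar>u\<bar> + \<bar>w\<bar>)"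
    using dr gl unfolding rhs by (simp add: abs_le_iff)
  have rD: "\<bar>dsol (t + ?\<tau>) - dsol t - ?\<tau> * rhs_d (bsol t) (dsol t)\<bar> \<le> LG * (1 + Ld) * ?\<tau>^2"
    by (rule resid_d[OF t]) simp
  define A where "A = ?En - ?y - rhs_d (bsol t) (dsol t)"
  define R where "R = dsol (t + ?\<tau>) - dsol t - ?\<tau> * rhs_d (bsol t) (dsol t)"
  have mD: "E (hilt_step F \<Gamma> N (j, m)) (\<lambda>s'. real (snd s') / real N) = (real m - real m / real N + ?En) / real N"
    using step_moments_d(1)[OF N v] by simp
  have "E (hilt_step F \<Gamma> N (j, m)) (\<lambda>s'. real (snd s') / real N) - dsol (t + ?\<tau>) - w = A / real N - R"
    unfolding mD w_def A_def R_def using Np by (simp add: field_simps)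
  then have "\<bar>E (hilt_step F \<Gamma> N (j, m)) (\<lambda>s'. real (snd s') / real N) - dsol (t + ?\<tau>) - w\<bar>
      \<le> \<bar>A\<bar> / real N + \<bar>R\<bar>" using Np abs_triangle_ineq4[of "A / real N" R] by (simp add: abs_div)
  also have "\<dots> \<le> (C\<eta> / real N + LG * (\<bar>u\<bar> + \<bar>w\<bar>)) / real N + LG * (1 + Ld) * ?\<tau>^2"
    using inner rD Np unfolding A_def R_def by (intro add_mono divide_right_mono) auto
  also have "\<dots> = (LG * (\<bar>u\<bar> + \<bar>w\<bar>) + C\<eta> / real N + LG * (1 + Ld) / real N) / real N"
    using Np by (simp add: field_simps power2_eq_square)
  finally show ?thesis unfolding u_def w_def .
qed

lemma err_step_d:
  assumes N: "N0 \<le> N" and v: "j + m \<le> N" and t: "0 \<le> t"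
  shows "E (hilt_step F \<Gamma> N (j, m)) (\<lambda>s'. (real (snd s') / real N - dsol (t + 1 / real N))^2)
    \<le> Cv / (real N)^2 + ((1 + 1 / real N) * (real m / real N - dsol t)^2
         + 2 * (LG * (\<bar>real j / real N - bsol t\<bar> + \<bar>real m / real N - dsol t\<bar>) + C\<eta> / real N
                + LG * (1 + Ld) / real N)^2 / real N)"
proof -
  have N1: "1 \<le> real N" using N0(1)[OF N] by simp
  let ?P = "hilt_step F \<Gamma> N (j, m)"
  let ?ZD = "\<lambda>s'. real (snd s') / real N" and ?tD = "dsol (t + 1 / real N)"
  have vD: "E ?P (\<lambda>s'. (?ZD s' - real m / real N)^2) \<le> Cv / (real N)^2"
  proof -
    have "E ?P (\<lambda>s'. (?ZD s' - real m / real N)^2) = E ?P (\<lambda>s'. (real (snd s') - real m)^2) / (real N)^2"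
      by (simp add: diff_divide_distrib[symmetric] power_divide)
    also have "\<dots> \<le> Cv / (real N)^2" using step_moments_d(2)[OF N v] by (simp add: divide_right_mono)
    finally show ?thesis .
  qed
  have "(E ?P ?ZD - ?tD)^2 \<le> (1 + 1 / real N) * (real m / real N - dsol t)^2
      + 2 * (LG * (\<bar>real j / real N - bsol t\<bar> + \<bar>real m / real N - dsol t\<bar>) + C\<eta> / real N
             + LG * (1 + Ld) / real N)^2 / real N"
    using drift_d_close[OF N v t] by (intro sq_le_of_close[OF N1]) simp
  moreover have "E ?P (\<lambda>s'. (?ZD s' - ?tD)^2) \<le> E ?P (\<lambda>s'. (?ZD s' - real m / real N)^2) + (E ?P ?ZD - ?tD)^2"
    by (rule E_sq_shift[OF step_fin[OF N0(1)[OF N]]])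
  ultimately show ?thesis using vD by linarith
qed

definition C1 :: real where "C1 = 5 + 12 * LG^2"
definition C2 :: real where "C2 = 2 + Cv + 4 * Ld^2 + 6 * (C\<eta>^2 + LG^2 * (1 + Ld)^2)"

lemma C1_nonneg: "0 \<le> C1" unfolding C1_def by simp
lemma C2_nonneg: "0 \<le> C2" unfolding C2_def using Cv_nonneg by simp

lemma error_recursion_arith:
  fixes N u v EB ED :: real
  assumes N: "1 \<le> N"
    and B: "EB \<le> 2 / N^2 + ((1 + 1 / N) * u^2 + 2 * (\<bar>v\<bar> + Ld / N)^2 / N)"
    and D: "ED \<le> Cv / N^2 + ((1 + 1 / N) * v^2 + 2 * (LG * (\<bar>u\<bar> + \<bar>v\<bar>) + C\<eta> / N + LG * (1 + Ld) / N)^2 / N)"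
  shows "EB + ED \<le> (1 + C1 / N) * (u^2 + v^2) + C2 / N^2"
proof -
  have Np: "0 < N" using N by simp
  have iN: "1 / N \<le> 1" using N by simp
  have uv: "(\<bar>u\<bar> + \<bar>v\<bar>)^2 \<le> 2 * u^2 + 2 * v^2" using sq_sum_le2[of "\<bar>u\<bar>" "\<bar>v\<bar>"] by simp
  have "(\<bar>v\<bar> + Ld / N)^2 \<le> 2 * v^2 + 2 * Ld^2 / N^2"
    using sq_sum_le2[of "\<bar>v\<bar>" "Ld / N"] by (simp add: power_divide)
  then have "2 * (\<bar>v\<bar> + Ld / N)^2 / N \<le> 4 * v^2 / N + 4 * Ld^2 / N^2 * (1 / N)"
    using Np by (simp add: field_simps)
  also have "\<dots> \<le> 4 * v^2 / N + 4 * Ld^2 / N^2"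
    using iN Np mult_left_mono[OF iN, of "4 * Ld^2 / N^2"] by simp
  finally have e1: "2 * (\<bar>v\<bar> + Ld / N)^2 / N \<le> 4 * v^2 / N + 4 * Ld^2 / N^2" .
  have "(LG * (\<bar>u\<bar> + \<bar>v\<bar>) + C\<eta> / N + LG * (1 + Ld) / N)^2
        \<le> 3 * (LG * (\<bar>u\<bar> + \<bar>v\<bar>))^2 + 3 * (C\<eta> / N)^2 + 3 * (LG * (1 + Ld) / N)^2"
    by (rule sq_sum_le3)
  also have "(LG * (\<bar>u\<bar> + \<bar>v\<bar>))^2 \<le> LG^2 * (2 * u^2 + 2 * v^2)"
    unfolding power_mult_distrib using uv by (intro mult_left_mono) auto
  finally have "(LG * (\<bar>u\<bar> + \<bar>v\<bar>) + C\<eta> / N + LG * (1 + Ld) / N)^2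
      \<le> 3 * (LG^2 * (2 * u^2 + 2 * v^2)) + 3 * (C\<eta>^2 / N^2) + 3 * (LG^2 * (1 + Ld)^2 / N^2)"
    by (simp add: power_divide power_mult_distrib)
  then have "2 * (LG * (\<bar>u\<bar> + \<bar>v\<bar>) + C\<eta> / N + LG * (1 + Ld) / N)^2 / N
      \<le> 2 * (3 * (LG^2 * (2 * u^2 + 2 * v^2)) + 3 * (C\<eta>^2 / N^2) + 3 * (LG^2 * (1 + Ld)^2 / N^2)) / N"
    using Np by (intro divide_right_mono mult_left_mono) auto
  also have "\<dots> = 12 * LG^2 * (u^2 + v^2) / N + 6 * (C\<eta>^2 + LG^2 * (1 + Ld)^2) / N^2 * (1 / N)"
    using Np by (simp add: field_simps)
  also have "\<dots> \<le> 12 * LG^2 * (u^2 + v^2) / N + 6 * (C\<eta>^2 + LG^2 * (1 + Ld)^2) / N^2"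
    using mult_left_mono[OF iN, of "6 * (C\<eta>^2 + LG^2 * (1 + Ld)^2) / N^2"] by simp
  finally have e2: "2 * (LG * (\<bar>u\<bar> + \<bar>v\<bar>) + C\<eta> / N + LG * (1 + Ld) / N)^2 / N
      \<le> 12 * LG^2 * (u^2 + v^2) / N + 6 * (C\<eta>^2 + LG^2 * (1 + Ld)^2) / N^2" .
  have "EB + ED \<le> 2 / N^2 + ((1 + 1 / N) * u^2 + (4 * v^2 / N + 4 * Ld^2 / N^2))
      + (Cv / N^2 + ((1 + 1 / N) * v^2 + (12 * LG^2 * (u^2 + v^2) / N + 6 * (C\<eta>^2 + LG^2 * (1 + Ld)^2) / N^2)))"
    using B D e1 e2 by linarith
  also have "\<dots> = (1 + 1 / N) * (u^2 + v^2) + 4 * v^2 / N + 12 * LG^2 * (u^2 + v^2) / N + C2 / N^2"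
    unfolding C2_def using Np by (simp add: field_simps)
  also have "\<dots> \<le> (1 + 1 / N) * (u^2 + v^2) + 4 * (u^2 + v^2) / N + 12 * LG^2 * (u^2 + v^2) / N + C2 / N^2"
    using Np by (simp add: divide_right_mono)
  also have "\<dots> = (1 + C1 / N) * (u^2 + v^2) + C2 / N^2"
    unfolding C1_def using Np by (simp add: field_simps)
  finally show ?thesis .
qed

lemma err_step:
  assumes N: "N0 \<le> N" and v: "j + m \<le> N" and t: "0 \<le> t"
  shows "E (hilt_step F \<Gamma> N (j, m)) (sq_err N (t + 1 / real N))
           \<le> (1 + C1 / real N) * sq_err N t (j, m) + C2 / (real N)^2"
proof -
  have N1: "1 \<le> real N" using N0(1)[OF N] by simp
  have "E (hilt_step F \<Gamma> N (j, m)) (sq_err N (t + 1 / real N))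
      = E (hilt_step F \<Gamma> N (j, m)) (\<lambda>s'. (real (fst s') / real N - bsol (t + 1 / real N))^2)
      + E (hilt_step F \<Gamma> N (j, m)) (\<lambda>s'. (real (snd s') / real N - dsol (t + 1 / real N))^2)"
    unfolding sq_err_def using step_fin[OF N0(1)[OF N]] by (simp add: E_add)
  also have "\<dots> \<le> (1 + C1 / real N) * sq_err N t (j, m) + C2 / (real N)^2"
    unfolding sq_err_def fst_conv snd_conv
    by (rule error_recursion_arith[OF N1 err_step_b[OF N v t] err_step_d[OF N v t]])
  finally show ?thesis .
qed

definition msq_err :: "nat \<Rightarrow> nat \<times> nat \<Rightarrow> nat \<Rightarrow> real" where
  "msq_err N s0 k = E (hilt_chain F \<Gamma> N s0 k) (sq_err N (real k / real N))"

lemma msq_err_rec: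
  assumes N: "N0 \<le> N" and s0: "fst s0 + snd s0 \<le> N"
  shows "msq_err N s0 (Suc k) \<le> (1 + C1 / real N) * msq_err N s0 k + C2 / (real N)^2"
proof -
  have N2: "2 \<le> N" using N0(1)[OF N] .
  note cs = chain_supp[OF N2 s0, of k]
  have t: "real (Suc k) / real N = real k / real N + 1 / real N" by (simp add: add_divide_distrib)
  have "msq_err N s0 (Suc k) = E (hilt_chain F \<Gamma> N s0 k) (\<lambda>s. E (hilt_step F \<Gamma> N s) (sq_err N (real k / real N + 1 / real N)))"
    unfolding msq_err_def t by (rule E_chain_Suc[OF N2 s0])
  also have "\<dots> \<le> E (hilt_chain F \<Gamma> N s0 k) (\<lambda>s. (1 + C1 / real N) * sq_err N (real k / real N) s + C2 / (real N)^2)"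
  proof (rule E_mono)
    show "finite (set_pmf (hilt_chain F \<Gamma> N s0 k))" using cs by blast
    fix s assume s: "s \<in> set_pmf (hilt_chain F \<Gamma> N s0 k)"
    obtain j m where jm: "s = (j, m)" by (cases s)
    have "j + m \<le> N" using cs s jm by auto
    then show "E (hilt_step F \<Gamma> N s) (sq_err N (real k / real N + 1 / real N))
          \<le> (1 + C1 / real N) * sq_err N (real k / real N) s + C2 / (real N)^2"
      unfolding jm by (rule err_step[OF N]) simp
  qed
  also have "\<dots> = (1 + C1 / real N) * msq_err N s0 k + C2 / (real N)^2"
    unfolding msq_err_def using cs by (simp add: E_add E_const)
  finally show ?thesis .
qed

lemma msq_err_0: "msq_err N (0, D) 0 = (real D / real N - d0)^2"
  unfolding msq_err_def sq_err_def dsol_def using bsol0 phi_ext_neg[of 0] by simp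

lemma msq_err_bound:
  assumes N: "N0 \<le> N" and D: "D \<le> N" and T: "0 \<le> T" and k: "real k \<le> real N * T"
  shows "msq_err N (0, D) k \<le> exp (C1 * T) * ((real D / real N - d0)^2 + T * C2 / real N)"
proof -
  have Np: "0 < real N" using N0(1)[OF N] by simp
  have kT: "real k / real N \<le> T" using k Np by (simp add: divide_le_eq mult.commute)
  have "msq_err N (0, D) k \<le> (1 + C1 / real N)^k * (msq_err N (0, D) 0 + real k * (C2 / (real N)^2))"
    by (rule linear_recursion_bound) (use msq_err_rec[OF N] D C1_nonneg C2_nonneg in auto)
  also have "\<dots> \<le> exp (C1 * T) * ((real D / real N - d0)^2 + T * C2 / real N)"
  proof (rule mult_mono)
    have "(1 + C1 / real N)^k \<le> exp (real k * (C1 / real N))"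
      using C1_nonneg Np by (intro one_plus_pow_le_exp) simp
    also have "\<dots> = exp (C1 * (real k / real N))" by simp
    also have "\<dots> \<le> exp (C1 * T)" using mult_left_mono[OF kT C1_nonneg] by simp
    finally show "(1 + C1 / real N)^k \<le> exp (C1 * T)" .
    have "real k * (C2 / (real N)^2) = (real k / real N) * C2 / real N" by (simp add: power2_eq_square)
    also have "\<dots> \<le> T * C2 / real N" using kT C2_nonneg Np by (intro divide_right_mono mult_right_mono) auto
    finally show "msq_err N (0, D) 0 + real k * (C2 / (real N)^2) \<le> (real D / real N - d0)^2 + T * C2 / real N"
      unfolding msq_err_0 by simp
    show "0 \<le> msq_err N (0, D) 0 + real k * (C2 / (real N)^2)" using C2_nonneg unfolding msq_err_0 by simp
  qed simp
  finally show ?thesis .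
qed

end
context hilt_model begin

section \<open>From the grid to the whole time interval\<close>

definition sup_dev :: "nat \<Rightarrow> real \<Rightarrow> (nat \<times> nat) list \<Rightarrow> real" where
  "sup_dev N T xs = (SUP u\<in>{0..T}. dist (real (fst (xs ! nat \<lfloor>real N * u\<rfloor>)) / real N,
                                         real (snd (xs ! nat \<lfloor>real N * u\<rfloor>)) / real N) (bsol u, dsol u))"

definition grid_slot :: "nat \<Rightarrow> real \<Rightarrow> nat \<Rightarrow> nat \<Rightarrow> nat" where
  "grid_slot N T L i = nat \<lfloor>real N * (real i * T / real L)\<rfloor>"

lemma grid_slot_props:
  assumes N: "0 < real N" and T: "0 < T" and L: "1 \<le> L"
  shows "\<bar>real (grid_slot N T L i) / real N - real i * T / real L\<bar> \<le> 1 / real N"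
    and "i \<le> L \<Longrightarrow> grid_slot N T L i \<le> nat \<lfloor>real N * T\<rfloor>"
    and "real i * T / real L \<le> u \<Longrightarrow> grid_slot N T L i \<le> nat \<lfloor>real N * u\<rfloor>"
    and "u \<le> real i * T / real L \<Longrightarrow> nat \<lfloor>real N * u\<rfloor> \<le> grid_slot N T L i"
proof -
  have mono: "nat \<lfloor>real N * x\<rfloor> \<le> nat \<lfloor>real N * y\<rfloor>" if "x \<le> y" for x y
    using that N by (intro nat_mono floor_mono mult_left_mono) auto
  show "\<bar>real (grid_slot N T L i) / real N - real i * T / real L\<bar> \<le> 1 / real N"
    unfolding grid_slot_def using T L by (intro floor_scaled_close[OF _ N]) simp
  show "grid_slot N T L i \<le> nat \<lfloor>real N * u\<rfloor>" if "real i * T / real L \<le> u"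
    unfolding grid_slot_def by (rule mono[OF that])
  show "nat \<lfloor>real N * u\<rfloor> \<le> grid_slot N T L i" if "u \<le> real i * T / real L"
    unfolding grid_slot_def by (rule mono[OF that])
  assume "i \<le> L"
  then have "real i * T \<le> real L * T" using T by (intro mult_right_mono) auto
  then have "real i * T / real L \<le> T" using L by (simp add: divide_le_eq mult.commute)
  then show "grid_slot N T L i \<le> nat \<lfloor>real N * T\<rfloor>" unfolding grid_slot_def by (rule mono)
qed

definition Kg :: real where "Kg = 3 + Ld"

lemma sum_sol_lip:
  assumes "0 \<le> s" "0 \<le> t"
  shows "\<bar>(bsol s + dsol s) - (bsol t + dsol t)\<bar> \<le> (1 + Ld) * \<bar>s - t\<bar>"
  using bsol_lip[OF assms] dsol_lip[OF assms] by (simp add: algebra_simps abs_le_iff)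

lemma sq_err_small:
  assumes "sq_err N t s \<le> \<delta>^2" "0 \<le> \<delta>"
  shows "\<bar>real (fst s) / real N - bsol t\<bar> \<le> \<delta>"
    "\<bar>real (fst s + snd s) / real N - (bsol t + dsol t)\<bar> \<le> 2 * \<delta>"
proof -
  let ?x = "real (fst s) / real N - bsol t" and ?y = "real (snd s) / real N - dsol t"
  have "?x^2 \<le> \<delta>^2" "?y^2 \<le> \<delta>^2"
    using assms(1) zero_le_power2[of ?x] zero_le_power2[of ?y] unfolding sq_err_def by linarith+
  then have x: "\<bar>?x\<bar> \<le> \<delta>" and y: "\<bar>?y\<bar> \<le> \<delta>"
    using assms(2) by (metis abs_le_square_iff abs_of_nonneg)+
  show "\<bar>?x\<bar> \<le> \<delta>" by (rule x)
  have "real (fst s + snd s) / real N - (bsol t + dsol t) = ?x + ?y" by (simp add: add_divide_distrib)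
  then show "\<bar>real (fst s + snd s) / real N - (bsol t + dsol t)\<bar> \<le> 2 * \<delta>" using x y by simp
qed

text \<open>Both the trajectory and the solution are sandwiched between their values at the two
  ends of the grid cell containing u.\<close>
lemma pathwise:
  fixes N L n :: nat and T \<delta> :: real and xs :: "(nat \<times> nat) list"
  assumes N2: "2 \<le> N" and L: "1 \<le> L" and T: "0 < T" and n: "n = nat \<lfloor>real N * T\<rfloor>"
    and mono: "\<And>i i'. i \<le> i' \<Longrightarrow> i' \<le> n \<Longrightarrow>
        fst (xs ! i) \<le> fst (xs ! i') \<and> fst (xs ! i) + snd (xs ! i) \<le> fst (xs ! i') + snd (xs ! i')"
    and grid: "\<And>i. i \<le> L \<Longrightarrow> sq_err N (real (grid_slot N T L i) / real N) (xs ! grid_slot N T L i) \<le> \<delta>^2"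
    and \<delta>: "0 \<le> \<delta>" and u: "u \<in> {0..T}"
  shows "dist (real (fst (xs ! nat \<lfloor>real N * u\<rfloor>)) / real N, real (snd (xs ! nat \<lfloor>real N * u\<rfloor>)) / real N)
              (bsol u, dsol u) \<le> 4 * \<delta> + Kg / real N + Kg * T / real L"
proof -
  have Np: "0 < real N" using N2 by simp
  define ug where "ug i = real i * T / real L" for i :: nat
  define kg where "kg = grid_slot N T L"
  define k where "k = nat \<lfloor>real N * u\<rfloor>"
  define B where "B k = real (fst (xs ! k)) / real N" for k
  define A where "A k = real (fst (xs ! k) + snd (xs ! k)) / real N" for k
  define a where "a t = bsol t + dsol t" for t
  obtain i where i: "i < L" "ug i \<le> u" "u \<le> ug (Suc i)"
    using grid_cell[OF T L u] unfolding ug_def by blast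
  have ug0: "0 \<le> ug j" for j unfolding ug_def using T L by simp
  note slot = grid_slot_props[OF Np T L, folded ug_def kg_def]
  have k1: "kg i \<le> k" and k2: "k \<le> kg (Suc i)" and k2n: "kg (Suc i) \<le> n"
    using slot(3)[OF i(2)] slot(4)[OF i(3)] slot(2)[of "Suc i"] i(1) unfolding k_def n by auto
  note m1 = mono[OF k1 order.trans[OF k2 k2n]] and m2 = mono[OF k2 k2n]
  note ti = slot(1)
  have step: "\<bar>ug (Suc i) - ug i\<bar> = T / real L" using T L by (simp add: ug_def field_simps)
  have ge: "\<bar>B (kg j) - bsol (real (kg j) / real N)\<bar> \<le> \<delta>"
    "\<bar>A (kg j) - a (real (kg j) / real N)\<bar> \<le> 2 * \<delta>" if "j \<le> L" for j
    using sq_err_small[OF grid[OF that] \<delta>] unfolding A_def B_def a_def kg_def by auto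
  have L0: "0 \<le> 1 + Ld" using Ld_nonneg by simp
  have Bm: "B (kg i) \<le> B k" "B k \<le> B (kg (Suc i))" using m1 m2 Np unfolding B_def by (auto simp: divide_right_mono)
  have bm: "bsol (ug i) \<le> bsol u" "bsol u \<le> bsol (ug (Suc i))"
    using bsol_mono ug0 i(2,3) u by (meson atLeastAtMost_iff)+
  have bt: "\<bar>bsol (real (kg j) / real N) - bsol (ug j)\<bar> \<le> 1 / real N" for j
    using bsol_lip[OF _ ug0, of "real (kg j) / real N" j] ti[of j] by simp
  have bs: "\<bar>bsol (ug (Suc i)) - bsol (ug i)\<bar> \<le> T / real L" using bsol_lip[OF ug0 ug0] step by metis
  have Berr: "\<bar>B k - bsol u\<bar> \<le> \<delta> + 1 / real N + T / real L"
    by (rule sandwich_bound[OF Bm bm ge(1) ge(1) bt bt bs]) (use i(1) in auto)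
  have Am: "A (kg i) \<le> A k" "A k \<le> A (kg (Suc i))" using m1 m2 Np unfolding A_def by (auto simp: divide_right_mono)
  have am: "a (ug i) \<le> a u" "a u \<le> a (ug (Suc i))"
    unfolding a_def using sum_sol_mono ug0 i(2,3) u by (meson atLeastAtMost_iff)+
  have at: "\<bar>a (real (kg j) / real N) - a (ug j)\<bar> \<le> (1 + Ld) / real N" for j
    using sum_sol_lip[OF _ ug0, of "real (kg j) / real N" j] mult_left_mono[OF ti[of j] L0]
    unfolding a_def by simp
  have as: "\<bar>a (ug (Suc i)) - a (ug i)\<bar> \<le> (1 + Ld) * T / real L"
    using sum_sol_lip[OF ug0 ug0, of "Suc i" i] step unfolding a_def by simp
  have Aerr: "\<bar>A k - a u\<bar> \<le> 2 * \<delta> + (1 + Ld) / real N + (1 + Ld) * T / real L"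
    by (rule sandwich_bound[OF Am am ge(2) ge(2) at at as]) (use i(1) in auto)
  have "real (snd (xs ! k)) / real N - dsol u = (A k - a u) - (B k - bsol u)"
    unfolding A_def B_def a_def by (simp add: add_divide_distrib)
  then have Derr: "\<bar>real (snd (xs ! k)) / real N - dsol u\<bar> \<le> \<bar>A k - a u\<bar> + \<bar>B k - bsol u\<bar>" by simp
  have "dist (B k, real (snd (xs ! k)) / real N) (bsol u, dsol u)
        \<le> \<bar>B k - bsol u\<bar> + \<bar>real (snd (xs ! k)) / real N - dsol u\<bar>"
    using sqrt_sum_squares_le_sum_abs[of "B k - bsol u" "real (snd (xs ! k)) / real N - dsol u"]
    by (simp add: dist_Pair_Pair dist_real_def)
  also have "\<dots> \<le> 2 * (\<delta> + 1 / real N + T / real L) + (2 * \<delta> + (1 + Ld) / real N + (1 + Ld) * T / real L)"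
    using add_mono[OF Berr order.trans[OF Derr add_mono[OF Aerr Berr]]] by simp
  also have "\<dots> = 4 * \<delta> + Kg / real N + Kg * T / real L"
    unfolding Kg_def using Np L by (simp add: field_simps)
  finally show ?thesis unfolding B_def k_def .
qed

lemma tube_exit_grid:
  assumes N: "N0 \<le> N" and D: "D \<le> N" and T: "0 < T" and L: "1 \<le> L" and \<delta>: "0 < \<delta>"
    and small: "4 * \<delta> + Kg / real N + Kg * T / real L < \<epsilon>"
    and xs: "xs \<in> set_pmf (hilt_path F \<Gamma> N (0, D) (nat \<lfloor>real N * T\<rfloor>))" and far: "\<epsilon> < sup_dev N T xs"
  shows "\<exists>i\<le>L. \<delta>^2 < sq_err N (real (grid_slot N T L i) / real N) (xs ! grid_slot N T L i)"
proof (rule ccontr)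
  assume "\<not> ?thesis"
  then have grid: "\<And>i. i \<le> L \<Longrightarrow> sq_err N (real (grid_slot N T L i) / real N) (xs ! grid_slot N T L i) \<le> \<delta>^2"
    by (simp add: not_less)
  have N2: "2 \<le> N" using N0(1)[OF N] .
  have s0: "fst (0, D) + snd (0, D) \<le> N" using D by simp
  have "dist (real (fst (xs ! nat \<lfloor>real N * u\<rfloor>)) / real N, real (snd (xs ! nat \<lfloor>real N * u\<rfloor>)) / real N)
          (bsol u, dsol u) \<le> 4 * \<delta> + Kg / real N + Kg * T / real L" if u: "u \<in> {0..T}" for u
    using pathwise[OF N2 L T refl path_mono[OF N2 s0 xs] grid _ u] \<delta> by simp
  then have "sup_dev N T xs \<le> 4 * \<delta> + Kg / real N + Kg * T / real L"
    unfolding sup_dev_def by (intro cSUP_least) (use T in auto)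
  then show False using far small by simp
qed

text \<open>Markov's inequality at each of the L + 1 grid points and a union bound.\<close>
lemma prob_bound:
  assumes N: "N0 \<le> N" and D: "D \<le> N" and T: "0 < T" and L: "1 \<le> L" and \<delta>: "0 < \<delta>"
    and small: "4 * \<delta> + Kg / real N + Kg * T / real L < \<epsilon>"
  shows "measure_pmf.prob (hilt_path F \<Gamma> N (0, D) (nat \<lfloor>real N * T\<rfloor>)) {xs. \<epsilon> < sup_dev N T xs}
        \<le> (real L + 1) * (exp (C1 * T) * ((real D / real N - d0)^2 + T * C2 / real N)) / \<delta>^2"
proof -
  have N2: "2 \<le> N" using N0(1)[OF N] .
  have Np: "0 < real N" using N2 by simp
  have s0: "fst (0, D) + snd (0, D) \<le> N" using D by simp
  define p where "p = hilt_path F \<Gamma> N (0, D) (nat \<lfloor>real N * T\<rfloor>)"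
  define bnd where "bnd = exp (C1 * T) * ((real D / real N - d0)^2 + T * C2 / real N)"
  define Bad where "Bad i = {xs. \<delta>^2 < sq_err N (real (grid_slot N T L i) / real N) (xs ! grid_slot N T L i)}" for i
  have kn: "grid_slot N T L i \<le> nat \<lfloor>real N * T\<rfloor>" if "i \<le> L" for i
    by (rule grid_slot_props(2)[OF Np T L that])
  have slot_le: "real (grid_slot N T L i) \<le> real N * T" if "i \<le> L" for i
    by (rule order.trans[OF of_nat_mono[OF kn[OF that]] nat_floor_le]) (use T Np in simp)
  have bad_bound: "measure_pmf.prob p (Bad i) \<le> bnd / \<delta>^2" if i: "i \<le> L" for i
  proof -
    let ?k = "grid_slot N T L i"
    have "measure_pmf.prob p (Bad i)
        = measure_pmf.prob (map_pmf (\<lambda>xs. xs ! ?k) p) {s. \<delta>^2 < sq_err N (real ?k / real N) s}"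
      unfolding Bad_def by (simp add: vimage_def)
    also have "map_pmf (\<lambda>xs. xs ! ?k) p = hilt_chain F \<Gamma> N (0, D) ?k"
      unfolding p_def by (rule path_nth[OF kn[OF i]])
    also have "measure_pmf.prob (hilt_chain F \<Gamma> N (0, D) ?k) {s. \<delta>^2 < sq_err N (real ?k / real N) s}
               \<le> msq_err N (0, D) ?k / \<delta>^2"
      unfolding msq_err_def by (rule pmf_markov) (use chain_supp[OF N2 s0] \<delta> sq_err_nonneg in auto)
    also have "\<dots> \<le> bnd / \<delta>^2"
      unfolding bnd_def using msq_err_bound[OF N D _ slot_le[OF i]] T \<delta> by (simp add: divide_right_mono)
    finally show ?thesis .
  qed
  have "measure_pmf.prob p {xs. \<epsilon> < sup_dev N T xs} = measure_pmf.prob p ({xs. \<epsilon> < sup_dev N T xs} \<inter> set_pmf p)"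
    by (simp add: measure_Int_set_pmf)
  also have "\<dots> \<le> measure_pmf.prob p (\<Union>i\<in>{..L}. Bad i)"
    using tube_exit_grid[OF N D T L \<delta> small] unfolding p_def Bad_def
    by (intro measure_pmf.finite_measure_mono) auto
  also have "\<dots> \<le> (\<Sum>i\<in>{..L}. measure_pmf.prob p (Bad i))"
    by (rule measure_pmf.finite_measure_subadditive_finite) auto
  also have "\<dots> \<le> (\<Sum>i\<in>{..L}. bnd / \<delta>^2)" by (rule sum_mono) (use bad_bound in auto)
  also have "\<dots> = (real L + 1) * bnd / \<delta>^2" by simp
  finally show ?thesis unfolding p_def bnd_def by simp
qed

end
context hilt_model begin

text \<open>Choice of the grid: with \<delta> = \<epsilon>/16, a grid of L cells and N \<ge> N1 make the
  interpolation error of the pathwise estimate smaller than \<epsilon>.\<close>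
lemma grid_choice:
  assumes T: "0 < T" and \<epsilon>: "0 < \<epsilon>"
  obtains L N1 where "1 \<le> L" "N0 \<le> N1"
    "\<And>N. N1 \<le> N \<Longrightarrow> 4 * (\<epsilon> / 16) + Kg / real N + Kg * T / real L < \<epsilon>"
proof
  define L where "L = nat \<lceil>4 * Kg * T / \<epsilon>\<rceil> + 1"
  define N1 where "N1 = max N0 (nat \<lceil>4 * Kg / \<epsilon>\<rceil> + 1)"
  show "1 \<le> L" "N0 \<le> N1" unfolding L_def N1_def by simp_all
  have "4 * Kg * T / \<epsilon> < real L" unfolding L_def by linarith
  moreover have "0 < real L" unfolding L_def by simp
  ultimately have LT: "Kg * T / real L < \<epsilon> / 4" using \<epsilon> by (simp add: field_simps)
  fix N assume N: "N1 \<le> N"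
  then have "4 * Kg / \<epsilon> < real N" unfolding N1_def by linarith
  moreover have "0 < real N" using N \<open>N0 \<le> N1\<close> N0(1) by fastforce
  ultimately have "Kg / real N < \<epsilon> / 4" using \<epsilon> by (simp add: field_simps)
  then show "4 * (\<epsilon> / 16) + Kg / real N + Kg * T / real L < \<epsilon>" using LT \<epsilon> by linarith
qed

lemma convergence_to_bsol:
  fixes D0 :: "nat \<Rightarrow> nat"
  assumes D0_le: "\<forall>N. D0 N \<le> N" and D0_lim: "(\<lambda>N. real (D0 N) / real N) \<longlonglongrightarrow> d0"
    and T: "0 < T" and \<epsilon>: "0 < \<epsilon>"
  shows "(\<lambda>N. measure_pmf.prob (hilt_path F \<Gamma> N (0, D0 N) (nat \<lfloor>real N * T\<rfloor>)) {xs. \<epsilon> < sup_dev N T xs})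
         \<longlonglongrightarrow> 0"
proof -
  define \<delta> where "\<delta> = \<epsilon> / 16"
  have \<delta>: "0 < \<delta>" unfolding \<delta>_def using \<epsilon> by simp
  obtain L N1 where L: "1 \<le> L" and N1: "N0 \<le> N1"
    and small: "\<And>N. N1 \<le> N \<Longrightarrow> 4 * \<delta> + Kg / real N + Kg * T / real L < \<epsilon>"
    using grid_choice[OF T \<epsilon>] unfolding \<delta>_def by blast
  define bound where "bound N = (real L + 1) *
      (exp (C1 * T) * ((real (D0 N) / real N - d0)^2 + T * C2 / real N)) / \<delta>^2" for N :: nat
  have ev: "eventually (\<lambda>N. measure_pmf.prob (hilt_path F \<Gamma> N (0, D0 N) (nat \<lfloor>real N * T\<rfloor>))
      {xs. \<epsilon> < sup_dev N T xs} \<le> bound N) sequentially"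
    unfolding eventually_sequentially bound_def
    using prob_bound[OF order.trans[OF N1] _ T L \<delta> small] D0_le by blast
  have "(\<lambda>N. (real (D0 N) / real N - d0)^2 + T * C2 / real N) \<longlonglongrightarrow> (d0 - d0)^2 + 0"
    by (intro tendsto_intros D0_lim lim_const_over_n)
  then have "bound \<longlonglongrightarrow> (real L + 1) * (exp (C1 * T) * 0) / \<delta>^2"
    unfolding bound_def using \<delta> by (intro tendsto_intros) auto
  then have lim: "bound \<longlonglongrightarrow> 0" by simp
  show ?thesis by (rule tendsto_sandwich[OF _ ev tendsto_const lim]) simp
qed

lemma solutions_agree:
  "\<forall>b d b2 d2. hilt_ode_sol F f \<Gamma> d0 b d \<and> hilt_ode_sol F f \<Gamma> d0 b2 d2 \<longrightarrow>
     (\<forall>u\<ge>0. b u = b2 u \<and> d u = d2 u)"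
  using sol_unique by metis

lemma fluid_limit:
  fixes D0 :: "nat \<Rightarrow> nat"
  assumes D0_le: "\<forall>N. D0 N \<le> N" and D0_lim: "(\<lambda>N. real (D0 N) / real N) \<longlonglongrightarrow> d0"
  shows "\<forall>b d. hilt_ode_sol F f \<Gamma> d0 b d \<longrightarrow>
          (\<forall>T>0. \<forall>\<epsilon>>0.
             (\<lambda>N. measure_pmf.prob (hilt_path F \<Gamma> N (0, D0 N) (nat \<lfloor>real N * T\<rfloor>))
                {xs. (SUP u\<in>{0..T}.
                        dist (real (fst (xs ! nat \<lfloor>real N * u\<rfloor>)) / real N,
                              real (snd (xs ! nat \<lfloor>real N * u\<rfloor>)) / real N)
                             (b u, d u)) > \<epsilon>})
             \<longlonglongrightarrow> 0)"
proof (intro allI impI)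
  fix b d :: "real \<Rightarrow> real" and T \<epsilon> :: real
  assume sol: "hilt_ode_sol F f \<Gamma> d0 b d" and T: "0 < T" and \<epsilon>: "0 < \<epsilon>"
  have "b u = bsol u \<and> d u = dsol u" if "u \<in> {0..T}" for u
    using sol_unique[OF sol, of u] that unfolding dsol_def by simp
  then have "(SUP u\<in>{0..T}. dist (real (fst (xs ! nat \<lfloor>real N * u\<rfloor>)) / real N,
                                  real (snd (xs ! nat \<lfloor>real N * u\<rfloor>)) / real N) (b u, d u))
           = sup_dev N T xs" for xs :: "(nat \<times> nat) list" and N :: nat
    unfolding sup_dev_def by (intro SUP_cong) auto
  then show "(\<lambda>N. measure_pmf.prob (hilt_path F \<Gamma> N (0, D0 N) (nat \<lfloor>real N * T\<rfloor>))
                {xs. (SUP u\<in>{0..T}.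
                        dist (real (fst (xs ! nat \<lfloor>real N * u\<rfloor>)) / real N,
                              real (snd (xs ! nat \<lfloor>real N * u\<rfloor>)) / real N)
                             (b u, d u)) > \<epsilon>})
             \<longlonglongrightarrow> 0"
    using convergence_to_bsol[OF D0_le D0_lim T \<epsilon>] by simp
qed

end

theorem theorem1:
  fixes M :: "real measure" and F f f' :: "real \<Rightarrow> real"
    and \<Gamma> \<Gamma>' d0 :: real and D0 :: "nat \<Rightarrow> nat"
  assumes M: "real_distribution M" and nonneg: "AE x in M. 0 \<le> x"
    and F_def: "F = cdf M"
    and \<Gamma>: "0 < \<Gamma>" "\<Gamma> \<le> 1" and F\<Gamma>: "F \<Gamma> < 1"
    and \<Gamma>': "\<Gamma> < \<Gamma>'"
    and dens_nonneg: "\<forall>x\<in>{0..\<Gamma>'}. 0 \<le> f x"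
    and dens: "\<forall>x\<in>{0..\<Gamma>'}. (f has_integral F x) {0..x}"
    and fderiv: "\<forall>x\<in>{0..\<Gamma>'}. (f has_real_derivative f' x) (at x within {0..\<Gamma>'})"
    and fbdd: "\<exists>K. \<forall>x\<in>{0..\<Gamma>'}. \<bar>f' x\<bar> \<le> K"
    and D0_le: "\<forall>N. D0 N \<le> N"
    and D0_lim: "(\<lambda>N. real (D0 N) / real N) \<longlonglongrightarrow> d0"
    and d0: "0 < d0" "d0 \<le> 1"
  shows "(\<exists>b d. hilt_ode_sol F f \<Gamma> d0 b d) \<and>
         (\<forall>b d b2 d2. hilt_ode_sol F f \<Gamma> d0 b d \<and> hilt_ode_sol F f \<Gamma> d0 b2 d2 \<longrightarrow>
            (\<forall>u\<ge>0. b u = b2 u \<and> d u = d2 u)) \<and>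
         (\<forall>b d. hilt_ode_sol F f \<Gamma> d0 b d \<longrightarrow>
            (\<forall>T>0. \<forall>\<epsilon>>0.
               (\<lambda>N. measure_pmf.prob (hilt_path F \<Gamma> N (0, D0 N) (nat \<lfloor>real N * T\<rfloor>))
                  {xs. (SUP u\<in>{0..T}.
                          dist (real (fst (xs ! nat \<lfloor>real N * u\<rfloor>)) / real N,
                                real (snd (xs ! nat \<lfloor>real N * u\<rfloor>)) / real N)
                               (b u, d u)) > \<epsilon>})
               \<longlonglongrightarrow> 0))"
proof -
  interpret hilt_model M F f f' \<Gamma> \<Gamma>' d0
    by (intro hilt_model.intro; (fact M F_def \<Gamma>(1) \<Gamma>(2) F\<Gamma> \<Gamma>' dens fderiv fbdd d0(1) d0(2)))
  show ?thesis
    using sol_exists solutions_agree fluid_limit[OF D0_le D0_lim] by blast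
qed

end
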